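(* Let $\gamma\ge0$, $W=W_{\mathrm{dw}}+W_{\mathrm{sing}}$ with $W_{\mathrm{sing}}\in\{W_{\mathrm{sg}},I_{[-1,1]}\}$, and let (A1)–(A7) hold. Let $\mathcal K$ be a regularity weight with $\mathcal K(0,0,0,\tilde\mu)=0$ for all $\tilde\mu\in C_0^\infty(\Omega\times[0,T))$. Then every energy-variational solution $(v,S,\varphi,\mu,E)$ of type $\mathcal K$, with associated function $\beta$, satisfies $$\mu=-\Delta\varphi+W_{\mathrm{dw}}'(\varphi)+\beta,\qquad \beta\in\partial W_{\mathrm{sing}}(\varphi),$$ for a.e. $(x,t)\in\Omega\times[0,T)$.
   Context: Notation. $\Omega\subset\mathbb R^3$ is a bounded domain with $C^2$ boundary, $T\in(0,\infty]$. $\mathbb R^{3\times3}_{\mathrm{sym,Tr}}$ denotes the symmetric trace-free real $3\times 3$ matrices. For $v:\Omega\to\mathbb R^3$, $(\nabla v)_{\mathrm{sym}}=\frac12(\nabla v+\nabla v^\top)$, $(\nabla v)_{\mathrm{skw}}=\frac12(\nabla v-\nabla v^\top)$. $A:B=A_{jk}B_{jk}$; for third-order tensors $C\,\vdots\,D=C_{jkl}D_{jkl}$; $(a\otimes b)_{jk}=a_jb_k$, $(S\otimes v)_{jkl}=S_{jk}v_l$, $(\nabla S)_{jkl}=\partial_{x_l}S_{jk}$. $L^2_{\mathrm{div}}(\Omega)$ and $H^1_{0,\mathrm{div}}(\Omega)$ are the divergence-free vector fields in $L^2(\Omega)^3$ resp. $H^1_0(\Omega)^3$; $L^2_{\mathrm{sym,Tr}}(\Omega)$,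 $H^1_{\mathrm{sym,Tr}}(\Omega)$ are the $L^2$ resp. $H^1$ fields with values in $\mathbb R^{3\times3}_{\mathrm{sym,Tr}}$. $\langle\cdot,\cdot\rangle_{L^2}$ is the $L^2(\Omega)$ inner product, $\langle f,v\rangle_{H^1}$ the pairing of $H^{-1}(\Omega)^3$ with $H^1_0(\Omega)^3$. Standing assumptions. (A1) $\rho(\varphi)=\frac{\rho_1+\rho_2}{2}+\frac{\rho_2-\rho_1}{2}\varphi$ with constants $\rho_1,\rho_2>0$. (A2) $\nu\in C^0(\mathbb R)$ with $0<\nu_1\le\nu\le\nu_2$; $\eta\in C^1(\mathbb R)$ with $0\le\eta_1\le\eta\le\eta_2$ and $|\eta'|\le C$. (A3) $m\in C^1(\mathbb R)$ with $0<m_1\le m\le m_2$. (A4) $P:\Omega\times\mathbb R\times\mathbb R^{3\times 3}_{\mathrm{sym,Tr}}\to[0,\infty]$ is proper and measurable, $P(x,y,0)=0$, $(y,z)\mapsto P(x,y,z)$ is lower semicontinuous, $z\mapsto P(x,y,z)$ is convex, $y\mapsto P(x,y,z)$ is continuous; $\mathcal P(\varphi;S):=\int_\Omega P(x,\varphi(x),S(x))\,dx$. (A5) $v_0\in L^2_{\mathrm{div}}(\Omega)$, $S_0\in L^2_{\mathrm{sym,Tr}}(\Omega)$, $f\in L^2_{\mathrm{loc}}([0,T);H^{-1}(\Omega)^3)$, $\varphi_0\in H^1(\Omega)$ with $|\varphi_0|\le1$ a.e. and $|\Omega|^{-1}\int_\Omega\varphi_0\in(-1,1)$. (A6) $W_{\mathrm{dw}}\in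 C^2(\mathbb R)$, $W_{\mathrm{dw}}\ge0$, $W_{\mathrm{dw}}(\pm1)=0$ and $W_{\mathrm{dw}}>0$ elsewhere. (A7) $W_{\mathrm{sg}}\in C([-1,1])\cap C^2(-1,1)$, $W_{\mathrm{sg}}\ge0$, $W_{\mathrm{sg}}'(\varphi)\to-\infty$ as $\varphi\to-1$, $W_{\mathrm{sg}}'(\varphi)\to+\infty$ as $\varphi\to1$, $W_{\mathrm{sg}}''\ge-\kappa$ for some constant $\kappa\ge0$, and $W_{\mathrm{sg}}:=+\infty$ outside $[-1,1]$. $I_{[-1,1]}$ is $0$ on $[-1,1]$ and $+\infty$ elsewhere. Subdifferentials: $\partial W_{\mathrm{sg}}(\varphi)=\{W'_{\mathrm{sg}}(\varphi)\}$ if $|\varphi|<1$, $=\emptyset$ otherwise; $\partial I_{[-1,1]}(\varphi)=[0,\infty)$ if $\varphi=1$, $\{0\}$ if $|\varphi|<1$, $(-\infty,0]$ if $\varphi=-1$, $\emptyset$ otherwise. Energy: $\mathcal E(v,S,\varphi)=\int_\Omega\frac{\rho(\varphi)}{2}|v|^2+\frac12|S|^2+\frac12|\nabla\varphi|^2+W(\varphi)\,dx$. Test space $\mathfrak T=C^\infty_{0,\mathrm{div}}(\Omega\times[0,T))\times C^\infty_{0,\mathrm{sym,Tr}}(\Omega\times[0,T))\times C^\infty_0(\Omega\times[0,T))\times C^\infty_0(\Omega\times[0,T))$ (smooth, compactly supported in $\Omega\times[0,T)$; respectively divergence-free, symmetric trace-free matrix valued, scalar, scalar). A regularity weight is a map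 $\mathcal K$ on $\mathfrak T$ (evaluated at each time) with values in $[0,\infty)$ and $\mathcal K(0)=0$. Energy-variational solution of type $\mathcal K$ (for $\gamma\ge0$): a quintuplet $(v,S,\varphi,\mu,E)$ with $v\in L^\infty_{\mathrm{loc}}([0,T);L^2_{\mathrm{div}})\cap L^2_{\mathrm{loc}}([0,T);H^1_{0,\mathrm{div}})$, $S\in L^\infty_{\mathrm{loc}}([0,T);L^2_{\mathrm{sym,Tr}})$, $\varphi\in L^\infty_{\mathrm{loc}}([0,T);H^1)\cap L^2_{\mathrm{loc}}([0,T);H^2)$ with $|\varphi|\le1$ a.e., $\mu\in L^2_{\mathrm{loc}}([0,T);H^1)$, $E\in BV_{\mathrm{loc}}([0,T])$ with $E(t)\ge\mathcal E(v(t),S(t),\varphi(t))$ for a.e. $t$, together with a function $\beta$ with $\beta(x,t)\in\partial W_{\mathrm{sing}}(\varphi(x,t))$ a.e., such that, writing $\rho=\rho(\varphi)$ and $J=-\frac{\rho_2-\rho_1}{2}m(\varphi)\nabla\mu$, $$\Big(E-\langle\rho v,\tilde v\rangle_{L^2}-\langle S,\tilde S\rangle_{L^2}-\langle\varphi,\tilde\varphi\rangle_{L^2}\Big)\Big|_s^t+\int_s^t\!\!\int_\Omega 2\nu(\varphi)|(\nabla v)_{\mathrm{sym}}|^2+\gamma|\nabla S|^2+m(\varphi)|\nabla\mu|^2\,dx\,d\tau+\int_s^t\mathcal P(\varphi;S)-\mathcal P(\varphi;\tilde S)\,d\tau$$ $$+\int_s^t\!\!\int_\Omega\rho v\cdot\partial_t\tilde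 v+\rho v\otimes v:\nabla\tilde v+v\otimes J:\nabla\tilde v-2\nu(\varphi)(\nabla v)_{\mathrm{sym}}:(\nabla\tilde v)_{\mathrm{sym}}-\eta(\varphi)S:(\nabla\tilde v)_{\mathrm{sym}}+\nabla\varphi\otimes\nabla\varphi:\nabla\tilde v\,dx\,d\tau$$ $$+\int_s^t\!\!\int_\Omega S:\partial_t\tilde S+S\otimes v\,\vdots\,\nabla\tilde S-\big(S(\nabla v)_{\mathrm{skw}}-(\nabla v)_{\mathrm{skw}}S\big):\tilde S-\gamma\nabla S\,\vdots\,\nabla\tilde S+\eta(\varphi)(\nabla v)_{\mathrm{sym}}:\tilde S\,dx\,d\tau$$ $$+\int_s^t\!\!\int_\Omega\varphi\,\partial_t\tilde\varphi-(v\cdot\nabla\varphi)\tilde\varphi-m(\varphi)\nabla\mu\cdot\nabla\tilde\varphi\,dx\,d\tau-\int_s^t\!\!\int_\Omega\big(\mu-(-\Delta\varphi+W_{\mathrm{dw}}'(\varphi)+\beta)\big)\tilde\mu\,dx\,d\tau$$ $$\le\int_s^t\mathcal K(\tilde v,\tilde S,\tilde\varphi,\tilde\mu)\big(E-\mathcal E(v,S,\varphi)\big)\,d\tau+\int_s^t\langle f,v-\tilde v\rangle_{H^1}\,d\tau$$ for all $(\tilde v,\tilde S,\tilde\varphi,\tilde\mu)\in\mathfrak T$ and a.e. $s<t$ in $(0,T)$, including $s=0$ with $(v(0),S(0),\varphi(0))=(v_0,S_0,\varphi_0)$. *)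

theory Defs
  imports "HOL-Analysis.Analysis"
begin

definition dd :: "'a::real_normed_vector \<Rightarrow> ('a \<Rightarrow> 'b::real_normed_vector) \<Rightarrow> 'a \<Rightarrow> 'b" where
  "dd w f x = vector_derivative (\<lambda>h. f (x + h *\<^sub>R w)) (at 0)"

fun iter_dd :: "'a::real_normed_vector list \<Rightarrow> ('a \<Rightarrow> 'b::real_normed_vector) \<Rightarrow> 'a \<Rightarrow> 'b" where
  "iter_dd [] f = f"
| "iter_dd (w # ws) f = dd w (iter_dd ws f)"

definition Ck :: "nat \<Rightarrow> ('a::euclidean_space \<Rightarrow> 'b::euclidean_space) \<Rightarrow> bool" where
  "Ck k f \<longleftrightarrow>
     (\<forall>ws. set ws \<subseteq> Basis \<and> length ws < k \<longrightarrow> iter_dd ws f differentiable_on UNIV) \<and>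
     (\<forall>ws. set ws \<subseteq> Basis \<and> length ws = k \<longrightarrow> continuous_on UNIV (iter_dd ws f))"

definition C_inf :: "('a::euclidean_space \<Rightarrow> 'b::euclidean_space) \<Rightarrow> bool" where
  "C_inf f \<longleftrightarrow> (\<forall>k. Ck k f)"

definition C2_boundary :: "(real^3) set \<Rightarrow> bool" where
  "C2_boundary \<Omega> \<longleftrightarrow>
     (\<forall>x0\<in>frontier \<Omega>. \<exists>r>0. \<exists>Q g.
        orthogonal_transformation Q \<and> Ck 2 (g :: real^2 \<Rightarrow> real) \<and>
        (\<forall>x\<in>ball x0 r. x \<in> \<Omega> \<longleftrightarrow>
            (Q (x - x0)) $ 3 > g (\<chi> i. (Q (x - x0)) $ (if i = (1::2) then (1::3) else 2))))"

definition bounded_C2_domain :: "(real^3) set \<Rightarrow> bool" where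
  "bounded_C2_domain \<Omega> \<longleftrightarrow> open \<Omega> \<and> connected \<Omega> \<and> \<Omega> \<noteq> {} \<and> bounded \<Omega> \<and> C2_boundary \<Omega>"

definition outer :: "real^3 \<Rightarrow> real^3 \<Rightarrow> real^3^3" where
  "outer a b = (\<chi> j k. a $ j * b $ k)"

definition outer3 :: "real^3^3 \<Rightarrow> real^3 \<Rightarrow> real^3^3^3" where
  "outer3 A b = (\<chi> j k l. A $ j $ k * b $ l)"

definition symp :: "real^3^3 \<Rightarrow> real^3^3" where
  "symp A = (1/2) *\<^sub>R (A + transpose A)"

definition skwp :: "real^3^3 \<Rightarrow> real^3^3" where
  "skwp A = (1/2) *\<^sub>R (A - transpose A)"

definition symTr :: "real^3^3 \<Rightarrow> bool" where
  "symTr A \<longleftrightarrow> transpose A = A \<and> trace A = 0"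

definition cpd :: "(real^3 \<Rightarrow> 'b::real_normed_vector) \<Rightarrow> 3 \<Rightarrow> real^3 \<Rightarrow> 'b" where
  "cpd f k x = vector_derivative (\<lambda>h. f (x + h *\<^sub>R axis k 1)) (at 0)"

definition test_fn :: "(real^3) set \<Rightarrow> (real^3 \<Rightarrow> 'b::euclidean_space) \<Rightarrow> bool" where
  "test_fn \<Omega> \<psi> \<longleftrightarrow> C_inf \<psi> \<and> (\<exists>K. compact K \<and> K \<subseteq> \<Omega> \<and> (\<forall>x. x \<notin> K \<longrightarrow> \<psi> x = 0))"

definition is_wpd :: "(real^3) set \<Rightarrow> (real^3 \<Rightarrow> 'b::euclidean_space) \<Rightarrow> 3 \<Rightarrow> (real^3 \<Rightarrow> 'b) \<Rightarrow> bool" where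
  "is_wpd \<Omega> u k g \<longleftrightarrow>
     u \<in> borel_measurable (lebesgue_on \<Omega>) \<and> g \<in> borel_measurable (lebesgue_on \<Omega>) \<and>
     (\<forall>\<psi>::real^3 \<Rightarrow> real. test_fn \<Omega> \<psi> \<longrightarrow>
        integrable (lebesgue_on \<Omega>) (\<lambda>x. cpd \<psi> k x *\<^sub>R u x) \<and>
        integrable (lebesgue_on \<Omega>) (\<lambda>x. \<psi> x *\<^sub>R g x) \<and>
        (\<integral>x. cpd \<psi> k x *\<^sub>R u x \<partial>lebesgue_on \<Omega>) = - (\<integral>x. \<psi> x *\<^sub>R g x \<partial>lebesgue_on \<Omega>))"

definition wpd :: "(real^3) set \<Rightarrow> (real^3 \<Rightarrow> 'b::euclidean_space) \<Rightarrow> 3 \<Rightarrow> real^3 \<Rightarrow> 'b" where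
  "wpd \<Omega> u k = (SOME g. is_wpd \<Omega> u k g)"

text \<open>weak gradients; convention (\<nabla>v)_{jk} = \<partial>_k v_j, (\<nabla>S)_{jkl} = \<partial>_l S_{jk}\<close>
definition wgrad_s :: "(real^3) set \<Rightarrow> (real^3 \<Rightarrow> real) \<Rightarrow> real^3 \<Rightarrow> real^3" where
  "wgrad_s \<Omega> u x = (\<chi> k. wpd \<Omega> u k x)"

definition wgrad_v :: "(real^3) set \<Rightarrow> (real^3 \<Rightarrow> real^3) \<Rightarrow> real^3 \<Rightarrow> real^3^3" where
  "wgrad_v \<Omega> v x = (\<chi> j k. wpd \<Omega> v k x $ j)"

definition wgrad_m :: "(real^3) set \<Rightarrow> (real^3 \<Rightarrow> real^3^3) \<Rightarrow> real^3 \<Rightarrow> real^3^3^3" where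
  "wgrad_m \<Omega> S x = (\<chi> j k l. wpd \<Omega> S l x $ j $ k)"

definition wdiv :: "(real^3) set \<Rightarrow> (real^3 \<Rightarrow> real^3) \<Rightarrow> real^3 \<Rightarrow> real" where
  "wdiv \<Omega> v x = (\<Sum>k\<in>UNIV. wpd \<Omega> v k x $ k)"

definition wlap :: "(real^3) set \<Rightarrow> (real^3 \<Rightarrow> real) \<Rightarrow> real^3 \<Rightarrow> real" where
  "wlap \<Omega> u x = (\<Sum>k\<in>UNIV. wpd \<Omega> (wpd \<Omega> u k) k x)"

definition L2 :: "(real^3) set \<Rightarrow> (real^3 \<Rightarrow> 'b::euclidean_space) \<Rightarrow> bool" where
  "L2 \<Omega> u \<longleftrightarrow> u \<in> borel_measurable (lebesgue_on \<Omega>) \<and> integrable (lebesgue_on \<Omega>) (\<lambda>x. (norm (u x))\<^sup>2)"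

definition L2norm :: "(real^3) set \<Rightarrow> (real^3 \<Rightarrow> 'b::euclidean_space) \<Rightarrow> real" where
  "L2norm \<Omega> u = sqrt (\<integral>x. (norm (u x))\<^sup>2 \<partial>lebesgue_on \<Omega>)"

definition H1 :: "(real^3) set \<Rightarrow> (real^3 \<Rightarrow> 'b::euclidean_space) \<Rightarrow> bool" where
  "H1 \<Omega> u \<longleftrightarrow> L2 \<Omega> u \<and> (\<forall>k. \<exists>g. is_wpd \<Omega> u k g \<and> L2 \<Omega> g)"

definition H1norm :: "(real^3) set \<Rightarrow> (real^3 \<Rightarrow> 'b::euclidean_space) \<Rightarrow> real" where
  "H1norm \<Omega> u = sqrt ((L2norm \<Omega> u)\<^sup>2 + (\<Sum>k\<in>UNIV. (L2norm \<Omega> (wpd \<Omega> u k))\<^sup>2))"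

definition H2 :: "(real^3) set \<Rightarrow> (real^3 \<Rightarrow> 'b::euclidean_space) \<Rightarrow> bool" where
  "H2 \<Omega> u \<longleftrightarrow> H1 \<Omega> u \<and> (\<forall>k. H1 \<Omega> (wpd \<Omega> u k))"

definition H2norm :: "(real^3) set \<Rightarrow> (real^3 \<Rightarrow> 'b::euclidean_space) \<Rightarrow> real" where
  "H2norm \<Omega> u = sqrt ((H1norm \<Omega> u)\<^sup>2 + (\<Sum>k\<in>UNIV. (H1norm \<Omega> (wpd \<Omega> u k))\<^sup>2))"

definition H1_0 :: "(real^3) set \<Rightarrow> (real^3 \<Rightarrow> 'b::euclidean_space) \<Rightarrow> bool" where
  "H1_0 \<Omega> u \<longleftrightarrow> H1 \<Omega> u \<and>
     (\<exists>\<psi>s. (\<forall>n. test_fn \<Omega> (\<psi>s n)) \<and> (\<lambda>n. H1norm \<Omega> (\<lambda>x. \<psi>s n x - u x)) \<longlonglongrightarrow> 0)"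

definition L2_div :: "(real^3) set \<Rightarrow> (real^3 \<Rightarrow> real^3) \<Rightarrow> bool" where
  "L2_div \<Omega> v \<longleftrightarrow> L2 \<Omega> v \<and>
     (\<forall>\<psi>::real^3 \<Rightarrow> real. test_fn \<Omega> \<psi> \<longrightarrow>
        (\<integral>x. v x \<bullet> (\<chi> k. cpd \<psi> k x) \<partial>lebesgue_on \<Omega>) = 0)"

definition H1_0div :: "(real^3) set \<Rightarrow> (real^3 \<Rightarrow> real^3) \<Rightarrow> bool" where
  "H1_0div \<Omega> v \<longleftrightarrow> H1_0 \<Omega> v \<and> (AE x in lebesgue_on \<Omega>. wdiv \<Omega> v x = 0)"

definition L2_symTr :: "(real^3) set \<Rightarrow> (real^3 \<Rightarrow> real^3^3) \<Rightarrow> bool" where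
  "L2_symTr \<Omega> S \<longleftrightarrow> L2 \<Omega> S \<and> (AE x in lebesgue_on \<Omega>. symTr (S x))"

definition Hm1 :: "(real^3) set \<Rightarrow> ((real^3 \<Rightarrow> real^3) \<Rightarrow> real) \<Rightarrow> bool" where
  "Hm1 \<Omega> F \<longleftrightarrow>
     (\<forall>a b u w. H1_0 \<Omega> u \<longrightarrow> H1_0 \<Omega> w \<longrightarrow>
         F (\<lambda>x. a *\<^sub>R u x + b *\<^sub>R w x) = a * F u + b * F w) \<and>
     (\<exists>C. \<forall>u. H1_0 \<Omega> u \<longrightarrow> \<bar>F u\<bar> \<le> C * H1norm \<Omega> u)"

definition Hm1norm :: "(real^3) set \<Rightarrow> ((real^3 \<Rightarrow> real^3) \<Rightarrow> real) \<Rightarrow> real" where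
  "Hm1norm \<Omega> F = Sup {\<bar>F u\<bar> | u. H1_0 \<Omega> u \<and> H1norm \<Omega> u \<le> 1}"

definition tint :: "ereal \<Rightarrow> real set" where
  "tint T = {t. 0 \<le> t \<and> ereal t < T}"

definition joint_meas :: "(real^3) set \<Rightarrow> ereal \<Rightarrow> (real^3 \<Rightarrow> real \<Rightarrow> 'b::euclidean_space) \<Rightarrow> bool" where
  "joint_meas \<Omega> T u \<longleftrightarrow> (\<lambda>(x,t). u x t) \<in> borel_measurable (lebesgue_on (\<Omega> \<times> tint T))"

text \<open>L^\<infinity>_loc([0,T); X), X given by membership predicate P and norm N\<close>
definition Linf_loc :: "(real^3) set \<Rightarrow> ereal \<Rightarrow> ((real^3 \<Rightarrow> 'b::euclidean_space) \<Rightarrow> bool)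
      \<Rightarrow> ((real^3 \<Rightarrow> 'b) \<Rightarrow> real) \<Rightarrow> (real^3 \<Rightarrow> real \<Rightarrow> 'b) \<Rightarrow> bool" where
  "Linf_loc \<Omega> T P N u \<longleftrightarrow> joint_meas \<Omega> T u \<and>
     (\<forall>t'\<in>tint T. \<exists>C. AE \<tau> in lebesgue_on {0..t'}. P (\<lambda>x. u x \<tau>) \<and> N (\<lambda>x. u x \<tau>) \<le> C)"

definition L2_loc :: "(real^3) set \<Rightarrow> ereal \<Rightarrow> ((real^3 \<Rightarrow> 'b::euclidean_space) \<Rightarrow> bool)
      \<Rightarrow> ((real^3 \<Rightarrow> 'b) \<Rightarrow> real) \<Rightarrow> (real^3 \<Rightarrow> real \<Rightarrow> 'b) \<Rightarrow> bool" where
  "L2_loc \<Omega> T P N u \<longleftrightarrow> joint_meas \<Omega> T u \<and>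
     (\<forall>t'\<in>tint T. (AE \<tau> in lebesgue_on {0..t'}. P (\<lambda>x. u x \<tau>)) \<and>
                  integrable (lebesgue_on {0..t'}) (\<lambda>\<tau>. (N (\<lambda>x. u x \<tau>))\<^sup>2))"

definition L2_loc_Hm1 :: "(real^3) set \<Rightarrow> ereal \<Rightarrow> (real \<Rightarrow> (real^3 \<Rightarrow> real^3) \<Rightarrow> real) \<Rightarrow> bool" where
  "L2_loc_Hm1 \<Omega> T f \<longleftrightarrow>
     (\<forall>u. H1_0 \<Omega> u \<longrightarrow> (\<lambda>\<tau>. f \<tau> u) \<in> borel_measurable (lebesgue_on (tint T))) \<and>
     (\<forall>t'\<in>tint T. (AE \<tau> in lebesgue_on {0..t'}. Hm1 \<Omega> (f \<tau>)) \<and>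
                  integrable (lebesgue_on {0..t'}) (\<lambda>\<tau>. (Hm1norm \<Omega> (f \<tau>))\<^sup>2))"

definition BV_on :: "(real \<Rightarrow> real) \<Rightarrow> real \<Rightarrow> real \<Rightarrow> bool" where
  "BV_on E a b \<longleftrightarrow> (\<exists>B. \<forall>ps. sorted ps \<and> set ps \<subseteq> {a..b} \<longrightarrow>
      (\<Sum>i<length ps - 1. \<bar>E (ps ! Suc i) - E (ps ! i)\<bar>) \<le> B)"

definition BV_loc :: "ereal \<Rightarrow> (real \<Rightarrow> real) \<Rightarrow> bool" where
  "BV_loc T E \<longleftrightarrow> (\<forall>t'. 0 \<le> t' \<and> ereal t' \<le> T \<longrightarrow> BV_on E 0 t')"

definition cpdx :: "(real^3 \<Rightarrow> real \<Rightarrow> 'b::real_normed_vector) \<Rightarrow> 3 \<Rightarrow> real^3 \<Rightarrow> real \<Rightarrow> 'b" where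
  "cpdx u k x t = vector_derivative (\<lambda>h. u (x + h *\<^sub>R axis k 1) t) (at 0)"

definition cpdt :: "(real^3 \<Rightarrow> real \<Rightarrow> 'b::real_normed_vector) \<Rightarrow> real^3 \<Rightarrow> real \<Rightarrow> 'b" where
  "cpdt u x t = vector_derivative (\<lambda>h. u x (t + h)) (at 0)"

text \<open>C^\<infinity>_0(\<Omega> \<times> [0,T)): smooth, with support in \<Omega>\<times>[0,T) compact
  (values for t < 0 belong to an arbitrary smooth extension and are irrelevant)\<close>
definition test_ST :: "(real^3) set \<Rightarrow> ereal \<Rightarrow> (real^3 \<Rightarrow> real \<Rightarrow> 'b::euclidean_space) \<Rightarrow> bool" where
  "test_ST \<Omega> T u \<longleftrightarrow> C_inf (\<lambda>(x,t). u x t) \<and>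
     (\<exists>K. compact K \<and> K \<subseteq> \<Omega> \<times> tint T \<and> (\<forall>x t. 0 \<le> t \<and> (x,t) \<notin> K \<longrightarrow> u x t = 0))"

definition test_ST_div :: "(real^3) set \<Rightarrow> ereal \<Rightarrow> (real^3 \<Rightarrow> real \<Rightarrow> real^3) \<Rightarrow> bool" where
  "test_ST_div \<Omega> T u \<longleftrightarrow> test_ST \<Omega> T u \<and>
     (\<forall>x t. 0 \<le> t \<longrightarrow> (\<Sum>k\<in>UNIV. cpdx u k x t $ k) = 0)"

definition test_ST_symTr :: "(real^3) set \<Rightarrow> ereal \<Rightarrow> (real^3 \<Rightarrow> real \<Rightarrow> real^3^3) \<Rightarrow> bool" where
  "test_ST_symTr \<Omega> T u \<longleftrightarrow> test_ST \<Omega> T u \<and> (\<forall>x t. 0 \<le> t \<longrightarrow> symTr (u x t))"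

definition cgrad_s :: "(real^3 \<Rightarrow> real \<Rightarrow> real) \<Rightarrow> real^3 \<Rightarrow> real \<Rightarrow> real^3" where
  "cgrad_s u x t = (\<chi> k. cpdx u k x t)"

definition cgrad_v :: "(real^3 \<Rightarrow> real \<Rightarrow> real^3) \<Rightarrow> real^3 \<Rightarrow> real \<Rightarrow> real^3^3" where
  "cgrad_v u x t = (\<chi> j k. cpdx u k x t $ j)"

definition cgrad_m :: "(real^3 \<Rightarrow> real \<Rightarrow> real^3^3) \<Rightarrow> real^3 \<Rightarrow> real \<Rightarrow> real^3^3^3" where
  "cgrad_m u x t = (\<chi> j k l. cpdx u l x t $ j $ k)"

definition rho :: "real \<Rightarrow> real \<Rightarrow> real \<Rightarrow> real" where
  "rho \<rho>1 \<rho>2 y = (\<rho>1 + \<rho>2) / 2 + (\<rho>2 - \<rho>1) / 2 * y"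

definition assm_A1 :: "real \<Rightarrow> real \<Rightarrow> bool" where
  "assm_A1 \<rho>1 \<rho>2 \<longleftrightarrow> \<rho>1 > 0 \<and> \<rho>2 > 0"

definition assm_A2 :: "(real \<Rightarrow> real) \<Rightarrow> (real \<Rightarrow> real) \<Rightarrow> bool" where
  "assm_A2 \<nu> \<eta> \<longleftrightarrow>
     continuous_on UNIV \<nu> \<and> (\<exists>\<nu>1 \<nu>2. 0 < \<nu>1 \<and> (\<forall>y. \<nu>1 \<le> \<nu> y \<and> \<nu> y \<le> \<nu>2)) \<and>
     Ck 1 \<eta> \<and> (\<exists>\<eta>1 \<eta>2. 0 \<le> \<eta>1 \<and> (\<forall>y. \<eta>1 \<le> \<eta> y \<and> \<eta> y \<le> \<eta>2)) \<and>
     (\<exists>C. \<forall>y. \<bar>deriv \<eta> y\<bar> \<le> C)"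

definition assm_A3 :: "(real \<Rightarrow> real) \<Rightarrow> bool" where
  "assm_A3 m \<longleftrightarrow> Ck 1 m \<and> (\<exists>m1 m2. 0 < m1 \<and> (\<forall>y. m1 \<le> m y \<and> m y \<le> m2))"

definition assm_A4 :: "(real^3) set \<Rightarrow> (real^3 \<Rightarrow> real \<Rightarrow> real^3^3 \<Rightarrow> ennreal) \<Rightarrow> bool" where
  "assm_A4 \<Omega> P \<longleftrightarrow>
     (\<lambda>(x,y,z). P x y z) \<in> borel_measurable (lebesgue_on (\<Omega> \<times> UNIV \<times> Collect symTr)) \<and>
     (\<exists>x\<in>\<Omega>. \<exists>y z. symTr z \<and> P x y z < \<infinity>) \<and>
     (\<forall>x\<in>\<Omega>. \<forall>y. P x y 0 = 0) \<and>
     (\<forall>x\<in>\<Omega>. \<forall>c. openin (top_of_set (UNIV \<times> Collect symTr))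
                     {p \<in> UNIV \<times> Collect symTr. c < P x (fst p) (snd p)}) \<and>
     (\<forall>x\<in>\<Omega>. \<forall>y z1 z2 a. symTr z1 \<longrightarrow> symTr z2 \<longrightarrow> 0 \<le> a \<longrightarrow> a \<le> 1 \<longrightarrow>
         P x y ((1 - a) *\<^sub>R z1 + a *\<^sub>R z2) \<le> ennreal (1 - a) * P x y z1 + ennreal a * P x y z2) \<and>
     (\<forall>x\<in>\<Omega>. \<forall>z. symTr z \<longrightarrow> continuous_on UNIV (\<lambda>y. P x y z))"

definition assm_A5 :: "(real^3) set \<Rightarrow> ereal \<Rightarrow> (real^3 \<Rightarrow> real^3) \<Rightarrow> (real^3 \<Rightarrow> real^3^3)
      \<Rightarrow> (real \<Rightarrow> (real^3 \<Rightarrow> real^3) \<Rightarrow> real) \<Rightarrow> (real^3 \<Rightarrow> real) \<Rightarrow> bool" where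
  "assm_A5 \<Omega> T v0 S0 f \<phi>0 \<longleftrightarrow>
     L2_div \<Omega> v0 \<and> L2_symTr \<Omega> S0 \<and> L2_loc_Hm1 \<Omega> T f \<and> H1 \<Omega> \<phi>0 \<and>
     (AE x in lebesgue_on \<Omega>. \<bar>\<phi>0 x\<bar> \<le> 1) \<and>
     (let mean = (\<integral>x. \<phi>0 x \<partial>lebesgue_on \<Omega>) / measure lebesgue \<Omega> in -1 < mean \<and> mean < 1)"

definition assm_A6 :: "(real \<Rightarrow> real) \<Rightarrow> bool" where
  "assm_A6 Wdw \<longleftrightarrow> Ck 2 Wdw \<and> (\<forall>y. Wdw y \<ge> 0) \<and> Wdw 1 = 0 \<and> Wdw (-1) = 0 \<and>
     (\<forall>y. y \<noteq> 1 \<and> y \<noteq> -1 \<longrightarrow> Wdw y > 0)"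

text \<open>W_sg on [-1,1] (its value +\<infinity> outside [-1,1] is encoded via |\<phi>| \<le> 1 a.e.)\<close>
definition assm_A7 :: "(real \<Rightarrow> real) \<Rightarrow> bool" where
  "assm_A7 Wsg \<longleftrightarrow>
     continuous_on {-1..1} Wsg \<and>
     (\<forall>y\<in>{-1<..<1}. Wsg field_differentiable (at y)) \<and>
     (\<forall>y\<in>{-1<..<1}. deriv Wsg field_differentiable (at y)) \<and>
     continuous_on {-1<..<1} (deriv (deriv Wsg)) \<and>
     (\<forall>y\<in>{-1..1}. Wsg y \<ge> 0) \<and>
     filterlim (deriv Wsg) at_bot (at_right (-1)) \<and>
     filterlim (deriv Wsg) at_top (at_left 1) \<and>
     (\<exists>\<kappa>\<ge>0. \<forall>y\<in>{-1<..<1}. deriv (deriv Wsg) y \<ge> - \<kappa>)"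

definition subdiff_sg :: "(real \<Rightarrow> real) \<Rightarrow> real \<Rightarrow> real \<Rightarrow> bool" where
  "subdiff_sg Wsg y b \<longleftrightarrow> \<bar>y\<bar> < 1 \<and> b = deriv Wsg y"

definition subdiff_ind :: "real \<Rightarrow> real \<Rightarrow> bool" where
  "subdiff_ind y b \<longleftrightarrow> (y = 1 \<and> b \<ge> 0) \<or> (\<bar>y\<bar> < 1 \<and> b = 0) \<or> (y = -1 \<and> b \<le> 0)"

definition energy :: "(real^3) set \<Rightarrow> real \<Rightarrow> real \<Rightarrow> (real \<Rightarrow> real)
      \<Rightarrow> (real^3 \<Rightarrow> real^3) \<Rightarrow> (real^3 \<Rightarrow> real^3^3) \<Rightarrow> (real^3 \<Rightarrow> real) \<Rightarrow> real" where
  "energy \<Omega> \<rho>1 \<rho>2 W v S \<phi> =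
     (\<integral>x. rho \<rho>1 \<rho>2 (\<phi> x) / 2 * (norm (v x))\<^sup>2 + (norm (S x))\<^sup>2 / 2
          + (norm (wgrad_s \<Omega> \<phi> x))\<^sup>2 / 2 + W (\<phi> x) \<partial>lebesgue_on \<Omega>)"

definition reg_weight :: "(real^3) set \<Rightarrow> ereal \<Rightarrow>
    ((real^3 \<Rightarrow> real \<Rightarrow> real^3) \<Rightarrow> (real^3 \<Rightarrow> real \<Rightarrow> real^3^3) \<Rightarrow> (real^3 \<Rightarrow> real \<Rightarrow> real)
        \<Rightarrow> (real^3 \<Rightarrow> real \<Rightarrow> real) \<Rightarrow> real \<Rightarrow> real) \<Rightarrow> bool" where
  "reg_weight \<Omega> T K \<longleftrightarrow>
     (\<forall>vt St pt mt \<tau>. test_ST_div \<Omega> T vt \<and> test_ST_symTr \<Omega> T St \<and> test_ST \<Omega> T pt \<and> test_ST \<Omega> T mt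
        \<longrightarrow> K vt St pt mt \<tau> \<ge> 0) \<and>
     (\<forall>\<tau>. K (\<lambda>x t. 0) (\<lambda>x t. 0) (\<lambda>x t. 0) (\<lambda>x t. 0) \<tau> = 0)"

definition EV_integrand where
  "EV_integrand \<Omega> \<gamma> \<rho>1 \<rho>2 \<nu> \<eta> m Wdw v S \<phi> \<mu> \<beta> vt St pt mt x \<tau> =
    (let ph = \<phi> x \<tau>; vv = v x \<tau>; SS = S x \<tau>;
         Dv = wgrad_v \<Omega> (\<lambda>y. v y \<tau>) x; Dvs = symp Dv; Dvk = skwp Dv;
         gphi = wgrad_s \<Omega> (\<lambda>y. \<phi> y \<tau>) x; gmu = wgrad_s \<Omega> (\<lambda>y. \<mu> y \<tau>) x;
         DS = wgrad_m \<Omega> (\<lambda>y. S y \<tau>) x;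
         r = rho \<rho>1 \<rho>2 ph;
         J = (- (\<rho>2 - \<rho>1) / 2 * m ph) *\<^sub>R gmu;
         Dtv = cgrad_v vt x \<tau>; DtS = cgrad_m St x \<tau>
     in 2 * \<nu> ph * (norm Dvs)\<^sup>2 + \<gamma> * (norm DS)\<^sup>2 + m ph * (norm gmu)\<^sup>2
      + r * (vv \<bullet> cpdt vt x \<tau>) + r * (outer vv vv \<bullet> Dtv) + outer vv J \<bullet> Dtv
      - 2 * \<nu> ph * (Dvs \<bullet> symp Dtv) - \<eta> ph * (SS \<bullet> symp Dtv) + outer gphi gphi \<bullet> Dtv
      + SS \<bullet> cpdt St x \<tau> + outer3 SS vv \<bullet> DtS - ((SS ** Dvk - Dvk ** SS) \<bullet> St x \<tau>)
      - \<gamma> * (DS \<bullet> DtS) + \<eta> ph * (Dvs \<bullet> St x \<tau>)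
      + ph * cpdt pt x \<tau> - (vv \<bullet> gphi) * pt x \<tau> - m ph * (gmu \<bullet> cgrad_s pt x \<tau>)
      - (\<mu> x \<tau> - (- wlap \<Omega> (\<lambda>y. \<phi> y \<tau>) x + deriv Wdw ph + \<beta> x \<tau>)) * mt x \<tau>)"

text \<open>the energy-variational inequality on [s,t] for a given test quadruple;
  the term \<int>(P(\<phi>;S) - P(\<phi>;St)) is split into its two [0,\<infinity>]-valued parts and the
  inequality is read in the extended reals\<close>
definition EV_ineq where
  "EV_ineq \<Omega> \<gamma> \<rho>1 \<rho>2 \<nu> \<eta> m P Wdw W f K v S \<phi> \<mu> E \<beta> vt St pt mt s t \<longleftrightarrow>
    (let bdry = (\<lambda>\<tau>. E \<tau> - (\<integral>x. rho \<rho>1 \<rho>2 (\<phi> x \<tau>) * (v x \<tau> \<bullet> vt x \<tau>) \<partial>lebesgue_on \<Omega>)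
                        - (\<integral>x. S x \<tau> \<bullet> St x \<tau> \<partial>lebesgue_on \<Omega>)
                        - (\<integral>x. \<phi> x \<tau> * pt x \<tau> \<partial>lebesgue_on \<Omega>));
         ig = (\<lambda>(x,\<tau>). EV_integrand \<Omega> \<gamma> \<rho>1 \<rho>2 \<nu> \<eta> m Wdw v S \<phi> \<mu> \<beta> vt St pt mt x \<tau>);
         PS = (\<integral>\<^sup>+\<tau>. (\<integral>\<^sup>+x. P x (\<phi> x \<tau>) (S x \<tau>) \<partial>lebesgue_on \<Omega>) \<partial>lebesgue_on {s..t});
         PSt = (\<integral>\<^sup>+\<tau>. (\<integral>\<^sup>+x. P x (\<phi> x \<tau>) (St x \<tau>) \<partial>lebesgue_on \<Omega>) \<partial>lebesgue_on {s..t});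
         Kt = (\<integral>\<^sup>+\<tau>. ennreal (K vt St pt mt \<tau> *
                 (E \<tau> - energy \<Omega> \<rho>1 \<rho>2 W (\<lambda>x. v x \<tau>) (\<lambda>x. S x \<tau>) (\<lambda>x. \<phi> x \<tau>))) \<partial>lebesgue_on {s..t});
         ft = (\<integral>\<tau>. f \<tau> (\<lambda>x. v x \<tau> - vt x \<tau>) \<partial>lebesgue_on {s..t})
     in integrable (lebesgue_on (\<Omega> \<times> {s..t})) ig \<and>
        ereal (bdry t - bdry s + (\<integral>p. ig p \<partial>lebesgue_on (\<Omega> \<times> {s..t}))) + enn2ereal PS
          \<le> enn2ereal Kt + ereal ft + enn2ereal PSt)"

definition EV_solution where
  "EV_solution \<Omega> T \<gamma> \<rho>1 \<rho>2 \<nu> \<eta> m P Wdw Wsing dWsing f v0 S0 \<phi>0 K v S \<phi> \<mu> E \<beta> \<longleftrightarrow>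
    (let W = (\<lambda>y. Wdw y + Wsing y) in
     Linf_loc \<Omega> T (L2_div \<Omega>) (L2norm \<Omega>) v \<and> L2_loc \<Omega> T (H1_0div \<Omega>) (H1norm \<Omega>) v \<and>
     Linf_loc \<Omega> T (L2_symTr \<Omega>) (L2norm \<Omega>) S \<and>
     (\<gamma> > 0 \<longrightarrow> L2_loc \<Omega> T (H1 \<Omega>) (H1norm \<Omega>) S) \<and>
     Linf_loc \<Omega> T (H1 \<Omega>) (H1norm \<Omega>) \<phi> \<and> L2_loc \<Omega> T (H2 \<Omega>) (H2norm \<Omega>) \<phi> \<and>
     (AE p in lebesgue_on (\<Omega> \<times> tint T). \<bar>\<phi> (fst p) (snd p)\<bar> \<le> 1) \<and>
     L2_loc \<Omega> T (H1 \<Omega>) (H1norm \<Omega>) \<mu> \<and>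
     BV_loc T E \<and>
     (AE \<tau> in lebesgue_on (tint T).
         E \<tau> \<ge> energy \<Omega> \<rho>1 \<rho>2 W (\<lambda>x. v x \<tau>) (\<lambda>x. S x \<tau>) (\<lambda>x. \<phi> x \<tau>)) \<and>
     (AE p in lebesgue_on (\<Omega> \<times> tint T). dWsing (\<phi> (fst p) (snd p)) (\<beta> (fst p) (snd p))) \<and>
     (\<forall>x\<in>\<Omega>. v x 0 = v0 x \<and> S x 0 = S0 x \<and> \<phi> x 0 = \<phi>0 x) \<and>
     (\<forall>vt St pt mt. test_ST_div \<Omega> T vt \<and> test_ST_symTr \<Omega> T St \<and> test_ST \<Omega> T pt \<and> test_ST \<Omega> T mt \<longrightarrow>
        (\<exists>N. N \<in> null_sets lebesgue \<and>
           (\<forall>s t. s \<in> {0} \<union> (tint T - N) \<and> t \<in> tint T - N \<and> s < t \<longrightarrow>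
              EV_ineq \<Omega> \<gamma> \<rho>1 \<rho>2 \<nu> \<eta> m P Wdw W f K v S \<phi> \<mu> E \<beta> vt St pt mt s t))))"

end

theory Submission
  imports Defs
begin

(* Test the energy-variational inequality with (0, 0, 0, k psi) for every integer k. Since
   K(0, 0, 0, .) = 0 and P(phi; 0) = 0, all terms except one are independent of k, and the
   remaining one is -k times the integral of r psi, where r = mu - (-Delta phi + W_dw'(phi) + beta)
   is the residual of the equation for the chemical potential. An affine function of k that is
   bounded above is constant, so r is orthogonal to every smooth psi compactly supported in
   Omega x (0, T), and the fundamental lemma of the calculus of variations gives r = 0 a.e.
   The inclusion beta in dW_sing(phi) is part of the definition of a solution. Of the
   hypotheses only the openness of Omega, P(x, y, 0) = 0 and K(0, 0, 0, .) = 0 are used.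
   The smooth test functions are built from exp(-1/s) in an algebra closed under partial
   derivatives. *)

section \<open>Smooth test functions\<close>

lemma dd_eq_derivative:
  fixes f :: "'a::real_normed_vector \<Rightarrow> 'b::real_normed_vector"
  assumes "(f has_derivative f') (at x)"
  shows "dd w f x = f' w"
proof -
  have "((\<lambda>h::real. x + h *\<^sub>R w) has_derivative (\<lambda>h. h *\<^sub>R w)) (at 0)"
    by (auto intro!: derivative_eq_intros)
  then have "((\<lambda>h::real. f (x + h *\<^sub>R w)) has_derivative (\<lambda>h. f' (h *\<^sub>R w))) (at 0)"
    using diff_chain_at[of "\<lambda>h::real. x + h *\<^sub>R w" "\<lambda>h. h *\<^sub>R w" 0 f f'] assms
    by (simp add: o_def)
  then have "((\<lambda>h::real. f (x + h *\<^sub>R w)) has_vector_derivative f' w) (at 0)"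
    unfolding has_vector_derivative_def
    using linear_scale[OF has_derivative_linear[OF assms]] by simp
  then show ?thesis unfolding dd_def by (rule vector_derivative_at)
qed

lemma dd_eq_frechet_derivative:
  fixes f :: "'a::real_normed_vector \<Rightarrow> 'b::real_normed_vector"
  assumes "f differentiable (at x)"
  shows "dd w f x = frechet_derivative f (at x) w"
  using assms dd_eq_derivative frechet_derivative_works by blast

definition smooth_class :: "('a::euclidean_space \<Rightarrow> real) set \<Rightarrow> bool" where
  "smooth_class S \<longleftrightarrow> (\<forall>f\<in>S. (\<forall>x. f differentiable (at x)) \<and> (\<forall>w\<in>Basis. dd w f \<in> S))"

lemma smooth_class_iter_dd:
  assumes "smooth_class S" "f \<in> S" "set ws \<subseteq> Basis"
  shows "iter_dd ws f \<in> S"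
  using assms(3) by (induction ws) (use assms(1,2) in \<open>auto simp: smooth_class_def\<close>)

lemma smooth_class_differentiable:
  assumes "smooth_class S" "f \<in> S"
  shows "f differentiable (at x)"
  using assms unfolding smooth_class_def by blast

lemma smooth_class_C_inf:
  assumes "smooth_class S" "f \<in> S"
  shows "C_inf f"
proof -
  have "iter_dd ws f differentiable_on UNIV" if "set ws \<subseteq> Basis" for ws
    using smooth_class_differentiable[OF assms(1) smooth_class_iter_dd[OF assms that]]
    by (simp add: differentiable_at_imp_differentiable_on)
  then show ?thesis
    unfolding C_inf_def Ck_def using differentiable_imp_continuous_on by blast
qed

lemma smooth_class_continuous_on:
  assumes "smooth_class S" "f \<in> S"
  shows "continuous_on A f"
  using smooth_class_differentiable[OF assms]
  by (meson differentiable_at_imp_differentiable_on differentiable_imp_continuous_on)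

inductive_set fun_alg :: "('a \<Rightarrow> real) set \<Rightarrow> ('a \<Rightarrow> real) set" for G where
  gen: "g \<in> G \<Longrightarrow> g \<in> fun_alg G"
| const: "(\<lambda>x. c) \<in> fun_alg G"
| add: "f \<in> fun_alg G \<Longrightarrow> h \<in> fun_alg G \<Longrightarrow> (\<lambda>x. f x + h x) \<in> fun_alg G"
| mult: "f \<in> fun_alg G \<Longrightarrow> h \<in> fun_alg G \<Longrightarrow> (\<lambda>x. f x * h x) \<in> fun_alg G"

lemma fun_alg_diff:
  assumes "f \<in> fun_alg G" "h \<in> fun_alg G"
  shows "(\<lambda>x. f x - h x) \<in> fun_alg G"
proof -
  have "(\<lambda>x. f x + (-1) * h x) \<in> fun_alg G"
    using assms by (intro fun_alg.add fun_alg.mult fun_alg.const)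
  then show ?thesis by simp
qed

lemma fun_alg_power: "f \<in> fun_alg G \<Longrightarrow> (\<lambda>x. f x ^ n) \<in> fun_alg G"
  by (induction n) (simp_all add: fun_alg.const fun_alg.mult)

lemma fun_alg_prod:
  "finite I \<Longrightarrow> (\<And>i. i \<in> I \<Longrightarrow> f i \<in> fun_alg G) \<Longrightarrow> (\<lambda>x. \<Prod>i\<in>I. f i x) \<in> fun_alg G"
  by (induction I rule: finite_induct) (simp_all add: fun_alg.const fun_alg.mult)

lemma smooth_class_fun_alg:
  fixes G :: "('a::euclidean_space \<Rightarrow> real) set"
  assumes "\<And>g x. g \<in> G \<Longrightarrow> g differentiable (at x)"
    and "\<And>g w. g \<in> G \<Longrightarrow> w \<in> Basis \<Longrightarrow> dd w g \<in> fun_alg G"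
  shows "smooth_class (fun_alg G)"
  unfolding smooth_class_def
proof
  fix f assume "f \<in> fun_alg G"
  then show "(\<forall>x. f differentiable (at x)) \<and> (\<forall>w\<in>Basis. dd w f \<in> fun_alg G)"
  proof induction
    case (gen g)
    then show ?case using assms by blast
  next
    case (const c)
    have "dd w (\<lambda>x::'a. c) = (\<lambda>x. 0)" for w
      by (rule ext, rule dd_eq_derivative) (auto intro!: derivative_eq_intros)
    then show ?case by (simp add: fun_alg.const)
  next
    case (add f h)
    have "dd w (\<lambda>x. f x + h x) x = dd w f x + dd w h x" for w x
      using add.IH frechet_derivative_works
      by (subst dd_eq_derivative[OF has_derivative_add]) (auto simp: dd_eq_frechet_derivative)
    then show ?case
      using add.IH by (simp add: fun_alg.add differentiable_add)
  next
    case (mult f h)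
    have "dd w (\<lambda>x. f x * h x) x = f x * dd w h x + dd w f x * h x" for w x
      using mult.IH frechet_derivative_works
      by (subst dd_eq_derivative[OF has_derivative_mult]) (auto simp: dd_eq_frechet_derivative)
    then show ?case
      using mult by (auto intro!: fun_alg.add fun_alg.mult simp: differentiable_mult)
  qed
qed

text \<open>The factor 1/s^n makes the family closed under differentiation.\<close>

definition flat_exp :: "nat \<Rightarrow> real \<Rightarrow> real" where
  "flat_exp n s = (if s > 0 then exp (- 1 / s) / s ^ n else 0)"

lemma flat_exp_quotient_tendsto_0: "((\<lambda>h. flat_exp n h / h) \<longlongrightarrow> 0) (at (0::real))"
proof -
  have "((\<lambda>x. x ^ (n+1) / exp x) \<longlongrightarrow> (0::real)) at_top"
    by (rule tendsto_power_div_exp_0)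
  then have "((\<lambda>h. inverse h ^ (n+1) / exp (inverse h)) \<longlongrightarrow> (0::real)) (at_right 0)"
    by (rule filterlim_compose) (rule filterlim_inverse_at_top_right)
  moreover have "\<forall>\<^sub>F h in at_right 0. inverse h ^ (n+1) / exp (inverse h) = flat_exp n h / h"
    using eventually_at_right_less[of "0::real"]
    by eventually_elim
       (simp add: flat_exp_def exp_minus field_simps power_Suc power_inverse flip: inverse_eq_divide)
  ultimately have "((\<lambda>h. flat_exp n h / h) \<longlongrightarrow> 0) (at_right 0)"
    by (rule Lim_transform_eventually)
  moreover have "\<forall>\<^sub>F h in at_left 0. 0 = flat_exp n h / h"
    unfolding eventually_at_left_field by (intro exI[of _ "-1"]) (simp add: flat_exp_def)
  then have "((\<lambda>h. flat_exp n h / h) \<longlongrightarrow> 0) (at_left 0)"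
    by (rule Lim_transform_eventually[OF tendsto_const])
  ultimately show ?thesis by (simp add: filterlim_at_split)
qed

lemma flat_exp_has_real_derivative:
  "(flat_exp n has_real_derivative (flat_exp (n+2) s - real n * flat_exp (n+1) s)) (at s)"
proof (cases s "0::real" rule: linorder_cases)
  case less
  have "((\<lambda>y. 0) has_real_derivative 0) (at s)" by simp
  then have "(flat_exp n has_real_derivative 0) (at s)"
    by (rule has_field_derivative_transform_within_open[where S="{..<0}"])
       (use less in \<open>auto simp: flat_exp_def\<close>)
  with less show ?thesis by (simp add: flat_exp_def)
next
  case equal
  then show ?thesis
    using flat_exp_quotient_tendsto_0[of n] by (simp add: has_field_derivative_iff flat_exp_def)
next
  case greater
  have "((\<lambda>y. exp (- 1 / y) / y ^ n) has_real_derivative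
          exp (- 1 / s) / s ^ (n+2) - real n * (exp (- 1 / s) / s ^ (n+1))) (at s)"
    using greater
    by (auto intro!: derivative_eq_intros simp: field_simps power_Suc) (cases n; simp)
  then have "(flat_exp n has_real_derivative
          exp (- 1 / s) / s ^ (n+2) - real n * (exp (- 1 / s) / s ^ (n+1))) (at s)"
    by (rule has_field_derivative_transform_within_open[where S="{0<..}"])
       (use greater in \<open>auto simp: flat_exp_def\<close>)
  with greater show ?thesis by (simp add: flat_exp_def)
qed

definition ridge_gens :: "('a::euclidean_space \<Rightarrow> real) set" where
  "ridge_gens = {(\<lambda>p. flat_exp n (a * (p \<bullet> e) + b)) | n a b e. e \<in> Basis}"

lemma ridge_gen_in_fun_alg:
  "e \<in> Basis \<Longrightarrow> (\<lambda>p. flat_exp n (a * (p \<bullet> e) + b)) \<in> fun_alg ridge_gens"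
  unfolding ridge_gens_def by (intro fun_alg.gen) blast

lemma smooth_class_ridge_alg: "smooth_class (fun_alg ridge_gens)"
proof (rule smooth_class_fun_alg)
  fix g :: "'a \<Rightarrow> real"
  assume "g \<in> ridge_gens"
  then obtain n a b and e :: 'a
    where g: "g = (\<lambda>p. flat_exp n (a * (p \<bullet> e) + b))" and e: "e \<in> Basis"
    unfolding ridge_gens_def by blast
  define D where "D s = flat_exp (n+2) s - real n * flat_exp (n+1) s" for s
  have "((\<lambda>p. a * (p \<bullet> e) + b) has_derivative (\<lambda>v. a * (v \<bullet> e))) (at x)" for x
    by (auto intro!: derivative_eq_intros)
  moreover have "(flat_exp n has_derivative (*) (D (a * (x \<bullet> e) + b))) (at (a * (x \<bullet> e) + b))"
    for x
    using flat_exp_has_real_derivative[of n "a * (x \<bullet> e) + b", unfolded has_field_derivative_def]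
    unfolding D_def .
  ultimately have dg: "(g has_derivative (\<lambda>v. D (a * (x \<bullet> e) + b) * (a * (v \<bullet> e)))) (at x)" for x
    using diff_chain_at unfolding g by (fastforce simp: o_def)
  then show "g differentiable (at x)" for x
    by (auto simp: differentiable_def)
  have "dd w g = (\<lambda>x. (a * (w \<bullet> e)) * D (a * (x \<bullet> e) + b))" for w
    using dd_eq_derivative[OF dg] by (auto simp: algebra_simps)
  then show "dd w g \<in> fun_alg ridge_gens" for w
    unfolding D_def using e
    by (auto intro!: fun_alg.mult fun_alg.const fun_alg_diff ridge_gen_in_fun_alg)
qed

lemma ridge_alg_C_inf: "f \<in> fun_alg ridge_gens \<Longrightarrow> C_inf f"
  by (rule smooth_class_C_inf[OF smooth_class_ridge_alg])

lemma ridge_alg_continuous_on: "f \<in> fun_alg ridge_gens \<Longrightarrow> continuous_on A f"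
  by (rule smooth_class_continuous_on[OF smooth_class_ridge_alg])

lemma ridge_alg_measurable: "f \<in> fun_alg ridge_gens \<Longrightarrow> f \<in> borel_measurable lebesgue"
  using continuous_imp_measurable_on_sets_lebesgue[of UNIV f] ridge_alg_continuous_on[of f]
  by (simp add: lebesgue_on_UNIV_eq)

definition bump :: "real \<Rightarrow> real \<Rightarrow> real \<Rightarrow> real" where
  "bump c d s = flat_exp 0 (s - c) * flat_exp 0 (d - s)"

lemma bump_nonneg: "0 \<le> bump c d s"
  by (simp add: bump_def flat_exp_def)

lemma bump_le_1: "bump c d s \<le> 1"
  unfolding bump_def flat_exp_def by (auto intro!: mult_le_one)

lemma bump_pos_iff: "0 < bump c d s \<longleftrightarrow> c < s \<and> s < d"
  by (auto simp: bump_def flat_exp_def)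

lemma bump_eq_0_iff: "bump c d s = 0 \<longleftrightarrow> \<not> (c < s \<and> s < d)"
  using bump_nonneg[of c d s] bump_pos_iff[of c d s] by linarith

definition box_bump :: "'a::euclidean_space \<Rightarrow> 'a \<Rightarrow> 'a \<Rightarrow> real" where
  "box_bump c d p = (\<Prod>i\<in>Basis. bump (c \<bullet> i) (d \<bullet> i) (p \<bullet> i))"

definition box_bump_approx :: "nat \<Rightarrow> 'a::euclidean_space \<Rightarrow> 'a \<Rightarrow> 'a \<Rightarrow> real" where
  "box_bump_approx n c d p = (\<Prod>i\<in>Basis. 1 - (1 - bump (c \<bullet> i) (d \<bullet> i) (p \<bullet> i)) ^ n)"

lemma bump_in_ridge_alg:
  assumes "i \<in> Basis"
  shows "(\<lambda>p. bump (c \<bullet> i) (d \<bullet> i) (p \<bullet> i)) \<in> fun_alg ridge_gens"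
proof -
  have "(\<lambda>p. flat_exp 0 (1 * (p \<bullet> i) + - (c \<bullet> i)) * flat_exp 0 ((-1) * (p \<bullet> i) + d \<bullet> i))
          \<in> fun_alg ridge_gens"
    using assms by (intro fun_alg.mult ridge_gen_in_fun_alg)
  then show ?thesis by (simp add: bump_def)
qed

lemma box_bump_in_ridge_alg: "box_bump c d \<in> fun_alg ridge_gens"
  unfolding box_bump_def[abs_def] by (intro fun_alg_prod bump_in_ridge_alg) auto

lemma box_bump_approx_in_ridge_alg: "box_bump_approx n c d \<in> fun_alg ridge_gens"
  unfolding box_bump_approx_def[abs_def]
  by (intro fun_alg_prod fun_alg_diff fun_alg_power fun_alg.const bump_in_ridge_alg) auto

lemma box_bump_pos: "p \<in> box c d \<Longrightarrow> 0 < box_bump c d p"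
  unfolding box_bump_def by (intro prod_pos) (auto simp: bump_pos_iff mem_box)

lemma box_bump_eq_0: "p \<notin> box c d \<Longrightarrow> box_bump c d p = 0"
  unfolding box_bump_def mem_box by (auto simp: bump_eq_0_iff)

lemma box_bump_approx_eq_0:
  assumes "p \<notin> box c d"
  shows "box_bump_approx n c d p = 0"
proof -
  obtain i where "i \<in> Basis" "bump (c \<bullet> i) (d \<bullet> i) (p \<bullet> i) = 0"
    using assms by (auto simp: mem_box bump_eq_0_iff)
  then show ?thesis unfolding box_bump_approx_def by (intro prod_zero) force+
qed

lemma box_bump_approx_bounds: "0 \<le> box_bump_approx n c d p \<and> box_bump_approx n c d p \<le> 1"
proof -
  have "0 \<le> 1 - (1 - bump (c \<bullet> i) (d \<bullet> i) (p \<bullet> i)) ^ n \<and> 1 - (1 - bump (c \<bullet> i) (d \<bullet> i) (p \<bullet> i)) ^ n \<le> 1"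
    for i
    using bump_nonneg[of "c \<bullet> i" "d \<bullet> i" "p \<bullet> i"] bump_le_1[of "c \<bullet> i" "d \<bullet> i" "p \<bullet> i"]
    by (auto intro!: power_le_one zero_le_power)
  then show ?thesis unfolding box_bump_approx_def by (auto intro!: prod_nonneg prod_le_1)
qed

lemma box_bump_approx_tendsto_indicator:
  "(\<lambda>n. box_bump_approx n c d p) \<longlonglongrightarrow> indicator (box c d) p"
proof (cases "p \<in> box c d")
  case True
  have "(\<lambda>n. 1 - (1 - bump (c \<bullet> i) (d \<bullet> i) (p \<bullet> i)) ^ n) \<longlonglongrightarrow> 1" if "i \<in> Basis" for i
  proof -
    have "\<bar>1 - bump (c \<bullet> i) (d \<bullet> i) (p \<bullet> i)\<bar> < 1"
      using True that bump_le_1[of "c \<bullet> i" "d \<bullet> i" "p \<bullet> i"] by (auto simp: bump_pos_iff mem_box)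
    then have "(\<lambda>n. (1 - bump (c \<bullet> i) (d \<bullet> i) (p \<bullet> i)) ^ n) \<longlonglongrightarrow> 0"
      by (intro LIMSEQ_power_zero) simp
    from tendsto_diff[OF tendsto_const this, of 1] show ?thesis by simp
  qed
  then have "(\<lambda>n. box_bump_approx n c d p) \<longlonglongrightarrow> (\<Prod>i\<in>(Basis::'a set). 1)"
    unfolding box_bump_approx_def by (intro tendsto_prod) auto
  then show ?thesis using True by simp
qed (simp add: box_bump_approx_eq_0)

section \<open>The fundamental lemma of the calculus of variations\<close>

lemma set_integral_borel_eq_0:
  fixes f :: "'a::euclidean_space \<Rightarrow> real"
  assumes f: "integrable lebesgue f"
    and boxes: "\<And>c d. (LINT x:box c d|lebesgue. f x) = 0"
    and total: "(LINT x|lebesgue. f x) = 0"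
    and A: "A \<in> sets borel"
  shows "(LINT x:A|lebesgue. f x) = 0"
proof -
  have set_int: "set_integrable lebesgue B f" if "B \<in> sets borel" for B
    unfolding set_integrable_def using that f by (intro integrable_mult_indicator) auto
  have "Int_stable (range (\<lambda>(a, b). box a (b::'a)))"
    by (auto simp: Int_stable_def box_Int_box)
  moreover have "range (\<lambda>(a, b). box a (b::'a)) \<subseteq> Pow UNIV" by auto
  moreover have "A \<in> sigma_sets UNIV (range (\<lambda>(a, b). box a b))"
    using A unfolding borel_eq_box by simp
  ultimately show ?thesis
  proof (induction rule: sigma_sets_induct_disjoint)
    case (basic A)
    then show ?case using boxes by auto
  next
    case empty
    then show ?case by (simp add: set_lebesgue_integral_def)
  next
    case (compl A)
    then have "A \<in> sets borel" unfolding borel_eq_box by simp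
    have "(LINT x:(UNIV - A)|lebesgue. f x) = (LINT x|lebesgue. f x - indicator A x *\<^sub>R f x)"
      unfolding set_lebesgue_integral_def
      by (intro Bochner_Integration.integral_cong) (auto simp: indicator_def)
    also have "\<dots> = (LINT x|lebesgue. f x) - (LINT x:A|lebesgue. f x)"
      unfolding set_lebesgue_integral_def
      using f set_int[OF \<open>A \<in> sets borel\<close>] unfolding set_integrable_def
      by (rule Bochner_Integration.integral_diff)
    finally show ?case using total compl.IH by simp
  next
    case (union A)
    then have A: "A i \<in> sets borel" for i unfolding borel_eq_box by auto
    have "(LINT x:(\<Union>i. A i)|lebesgue. f x) = (\<Sum>i. LINT x:A i|lebesgue. f x)"
    proof (rule lebesgue_integral_countable_add)
      show "set_integrable lebesgue (\<Union>i. A i) f" using A by (intro set_int) auto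
    qed (use A union.hyps(1) in \<open>auto simp: disjoint_family_on_def\<close>)
    then show ?case using union.IH by simp
  qed
qed

lemma AE_eq_0_if_box_integrals_eq_0:
  fixes f :: "'a::euclidean_space \<Rightarrow> real"
  assumes f: "integrable lebesgue f"
    and boxes: "\<And>c d. (LINT x:box c d|lebesgue. f x) = 0"
    and total: "(LINT x|lebesgue. f x) = 0"
  shows "AE x in lebesgue. f x = 0"
proof (rule density_unique_real[OF f integrable_zero])
  fix A :: "'a set"
  assume "A \<in> sets lebesgue"
  then obtain B N N' where BN: "A = B \<union> N" "N \<subseteq> N'" "N' \<in> null_sets lborel" "B \<in> sets lborel"
    using sets_completionE by metis
  have "AE x in lebesgue. x \<notin> N'"
    using BN(3) by (intro AE_completion AE_not_in)
  then have "AE x in lebesgue. indicator A x *\<^sub>R f x = indicator B x *\<^sub>R f x"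
    by eventually_elim (use BN in \<open>auto simp: indicator_def\<close>)
  moreover have [measurable]: "f \<in> borel_measurable lebesgue" "A \<in> sets lebesgue" "B \<in> sets lebesgue"
    using f \<open>A \<in> sets lebesgue\<close> BN(4) by auto
  ultimately have "(LINT x:A|lebesgue. f x) = (LINT x:B|lebesgue. f x)"
    unfolding set_lebesgue_integral_def by (intro integral_cong_AE) auto
  also have "\<dots> = 0"
    using BN(4) by (intro set_integral_borel_eq_0[OF f boxes total]) simp
  finally show "(LINT x:A|lebesgue. f x) = (LINT x:A|lebesgue. 0)" by simp
qed

text \<open>The enlargement leaves room for a test function that is positive on cbox a b; this gives
  local integrability of a function orthogonal to all test functions.\<close>

definition well_inside :: "'a::euclidean_space set \<Rightarrow> 'a \<Rightarrow> 'a \<Rightarrow> bool" where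
  "well_inside U a b \<longleftrightarrow> (\<forall>i\<in>Basis. a \<bullet> i < b \<bullet> i) \<and> cbox (2 *\<^sub>R a - b) (2 *\<^sub>R b - a) \<subseteq> U"

lemma cbox_subset_enlarged_box:
  fixes a b :: "'a::euclidean_space"
  assumes "\<forall>i\<in>Basis. a \<bullet> i < b \<bullet> i"
  shows "cbox a b \<subseteq> box (2 *\<^sub>R a - b) (2 *\<^sub>R b - a)"
  using assms by (auto simp: mem_box inner_diff_left) (smt (verit))+

lemma well_inside_cbox_subset: "well_inside U a b \<Longrightarrow> cbox a b \<subseteq> U"
  unfolding well_inside_def using cbox_subset_enlarged_box box_subset_cbox by blast

lemma Union_well_inside_boxes:
  fixes U :: "'a::euclidean_space set"
  assumes "open U"
  shows "\<Union>{box a b | a b. well_inside U a b} = U"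
proof
  show "\<Union>{box a b | a b. well_inside U a b} \<subseteq> U"
    using well_inside_cbox_subset box_subset_cbox by blast
next
  show "U \<subseteq> \<Union>{box a b | a b. well_inside U a b}"
  proof
    fix x assume "x \<in> U"
    then obtain e where e: "e > 0" "ball x e \<subseteq> U" using assms open_contains_ball by blast
    define \<delta> where "\<delta> = e / (4 * real DIM('a))"
    have \<delta>: "\<delta> > 0" unfolding \<delta>_def using e by auto
    define a where "a = x - \<delta> *\<^sub>R One"
    define b where "b = x + \<delta> *\<^sub>R One"
    have "cbox (2 *\<^sub>R a - b) (2 *\<^sub>R b - a) \<subseteq> ball x e"
    proof
      fix y assume y: "y \<in> cbox (2 *\<^sub>R a - b) (2 *\<^sub>R b - a)"
      have "\<bar>(x - y) \<bullet> i\<bar> \<le> 3 * \<delta>" if "i \<in> Basis" for i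
        using y that unfolding a_def b_def mem_box
        by (auto simp: inner_diff_left inner_add_left algebra_simps)
      then have "(\<Sum>i\<in>Basis. \<bar>(x - y) \<bullet> i\<bar>) \<le> (\<Sum>i\<in>(Basis::'a set). 3 * \<delta>)"
        by (intro sum_mono)
      also have "\<dots> = 3 * e / 4" unfolding \<delta>_def by simp
      finally have "norm (x - y) \<le> 3 * e / 4" using norm_le_l1[of "x - y"] by linarith
      then show "y \<in> ball x e" using e by (simp add: dist_norm)
    qed
    then have "well_inside U a b"
      unfolding well_inside_def a_def b_def using \<delta> e
      by (auto simp: inner_diff_left inner_add_left)
    moreover have "x \<in> box a b"
      unfolding a_def b_def mem_box using \<delta> by (auto simp: inner_diff_left inner_add_left)
    ultimately show "x \<in> \<Union>{box a b | a b. well_inside U a b}" by blast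
  qed
qed

context
  fixes g :: "'a::euclidean_space \<Rightarrow> real" and U :: "'a set"
  assumes orth: "\<And>\<psi> c d. \<psi> \<in> fun_alg ridge_gens \<Longrightarrow> (\<And>p. p \<notin> box c d \<Longrightarrow> \<psi> p = 0) \<Longrightarrow>
        cbox c d \<subseteq> U \<Longrightarrow> integrable lebesgue (\<lambda>p. g p * \<psi> p) \<and> (\<integral>p. g p * \<psi> p \<partial>lebesgue) = 0"
begin

lemma integrable_on_well_inside_cbox:
  assumes ab: "well_inside U a b"
  shows "integrable lebesgue (\<lambda>p. g p * indicator (cbox a b) p)"
proof -
  define F where "F = box_bump (2 *\<^sub>R a - b) (2 *\<^sub>R b - a)"
  have F: "F \<in> fun_alg ridge_gens" unfolding F_def by (rule box_bump_in_ridge_alg)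
  have gF: "integrable lebesgue (\<lambda>p. g p * F p)"
    using orth[OF F, of "2 *\<^sub>R a - b" "2 *\<^sub>R b - a"] ab
    unfolding well_inside_def F_def by (auto simp: box_bump_eq_0)
  have F_pos: "0 < F p" if "p \<in> cbox a b" for p
    using that ab cbox_subset_enlarged_box box_bump_pos unfolding well_inside_def F_def by blast
  have ne: "cbox a b \<noteq> {}" using ab unfolding well_inside_def by (auto simp: box_ne_empty less_imp_le)
  obtain x0 where x0: "x0 \<in> cbox a b" "\<And>y. y \<in> cbox a b \<Longrightarrow> F x0 \<le> F y"
    using continuous_attains_inf[OF compact_cbox ne ridge_alg_continuous_on[OF F]] by auto
  have meas: "(\<lambda>p. g p * indicator (cbox a b) p) \<in> borel_measurable lebesgue"
  proof -
    have eq: "(\<lambda>p. g p * indicator (cbox a b) p) = (\<lambda>p. (g p * F p) * (indicator (cbox a b) p / F p))"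
      using F_pos by (auto simp: indicator_def fun_eq_iff) (metis less_irrefl)
    have "indicator (cbox a b) \<in> borel_measurable lebesgue"
      by (rule borel_measurable_indicator) simp
    moreover have "(\<lambda>p. g p * F p) \<in> borel_measurable lebesgue"
      using gF by auto
    ultimately show ?thesis
      unfolding eq using ridge_alg_measurable[OF F] by measurable
  qed
  have bound: "AE p in lebesgue. norm (g p * indicator (cbox a b) p) \<le> norm (g p * F p / F x0)"
  proof (rule AE_I2)
    fix p
    show "norm (g p * indicator (cbox a b) p) \<le> norm (g p * F p / F x0)"
    proof (cases "p \<in> cbox a b")
      case True
      then have "1 \<le> F p / F x0" using x0 F_pos by simp
      then have "\<bar>g p\<bar> * 1 \<le> \<bar>g p\<bar> * (F p / F x0)" by (intro mult_left_mono) auto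
      then show ?thesis using True F_pos[OF True] F_pos[OF x0(1)] by (simp add: abs_mult)
    qed simp
  qed
  have "integrable lebesgue (\<lambda>p. g p * F p / F x0)"
    using gF by simp
  then show ?thesis
    using meas bound by (rule Bochner_Integration.integrable_bound)
qed

lemma integral_indicator_box_eq_0:
  assumes ab: "well_inside U a b" and cd: "cbox c d \<subseteq> cbox a b"
  shows "(\<integral>p. g p * indicator (box c d) p \<partial>lebesgue) = 0"
proof -
  have g_ab: "integrable lebesgue (\<lambda>p. g p * indicator (cbox a b) p)"
    by (rule integrable_on_well_inside_cbox[OF ab])
  have approx: "integrable lebesgue (\<lambda>p. g p * box_bump_approx n c d p)
      \<and> (\<integral>p. g p * box_bump_approx n c d p \<partial>lebesgue) = 0" for n
    using orth[OF box_bump_approx_in_ridge_alg] box_bump_approx_eq_0 cd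
      well_inside_cbox_subset[OF ab] by blast
  have "(\<lambda>n. \<integral>p. g p * box_bump_approx n c d p \<partial>lebesgue)
          \<longlonglongrightarrow> (\<integral>p. g p * indicator (box c d) p \<partial>lebesgue)"
  proof (rule integral_dominated_convergence[where w="\<lambda>p. norm (g p * indicator (cbox a b) p)"])
    have "(\<lambda>p. g p * indicator (box c d) p) = (\<lambda>p. (g p * indicator (cbox a b) p) * indicator (box c d) p)"
      using cd box_subset_cbox[of c d] by (auto simp: indicator_def fun_eq_iff)
    moreover have "(\<lambda>p. (g p * indicator (cbox a b) p) * indicator (box c d) p) \<in> borel_measurable lebesgue"
      by (rule borel_measurable_times[OF borel_measurable_integrable[OF g_ab]],
          rule borel_measurable_indicator) simp
    ultimately show "(\<lambda>p. g p * indicator (box c d) p) \<in> borel_measurable lebesgue"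
      by simp
    show "AE p in lebesgue. norm (g p * box_bump_approx n c d p) \<le> norm (g p * indicator (cbox a b) p)"
      for n
    proof (intro AE_I2)
      fix p show "norm (g p * box_bump_approx n c d p) \<le> norm (g p * indicator (cbox a b) p)"
      proof (cases "p \<in> box c d")
        case True
        then have "p \<in> cbox a b" using cd box_subset_cbox by blast
        then show ?thesis using box_bump_approx_bounds[of n c d p]
          by (auto simp: abs_mult intro!: mult_left_le)
      qed (simp add: box_bump_approx_eq_0)
    qed
    show "(\<lambda>p. g p * box_bump_approx n c d p) \<in> borel_measurable lebesgue" for n
      using approx by auto
    show "integrable lebesgue (\<lambda>p. norm (g p * indicator (cbox a b) p))"
      using g_ab by auto
    show "AE p in lebesgue. (\<lambda>n. g p * box_bump_approx n c d p) \<longlonglongrightarrow> g p * indicator (box c d) p"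
      by (intro AE_I2 tendsto_mult_left box_bump_approx_tendsto_indicator)
  qed
  then show ?thesis
    using approx LIMSEQ_unique[OF _ tendsto_const] by simp
qed

lemma set_integral_box_eq_0:
  assumes ab: "well_inside U a b"
  shows "(LINT p:box c d|lebesgue. g p * indicator (box a b) p) = 0"
proof -
  define c' :: 'a where "c' = (\<Sum>i\<in>Basis. max (a \<bullet> i) (c \<bullet> i) *\<^sub>R i)"
  define d' :: 'a where "d' = (\<Sum>i\<in>Basis. min (b \<bullet> i) (d \<bullet> i) *\<^sub>R i)"
  have "cbox c' d' \<subseteq> cbox a b"
    unfolding c'_def d'_def by (auto simp: mem_box inner_sum_left_Basis)
  then have "(\<integral>p. g p * indicator (box c' d') p \<partial>lebesgue) = 0"
    by (rule integral_indicator_box_eq_0[OF ab])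
  moreover have "box a b \<inter> box c d = box c' d'" unfolding c'_def d'_def by (rule box_Int_box)
  then have "(\<lambda>p. indicator (box c d) p *\<^sub>R (g p * indicator (box a b) p))
      = (\<lambda>p. g p * indicator (box c' d') p)"
    by (auto simp: indicator_def fun_eq_iff)
  ultimately show ?thesis unfolding set_lebesgue_integral_def by simp
qed

lemma AE_zero_on_well_inside_box:
  assumes ab: "well_inside U a b"
  shows "AE p in lebesgue. p \<in> box a b \<longrightarrow> g p = 0"
proof -
  define f where "f p = g p * indicator (box a b) p" for p
  have f_eq: "f = (\<lambda>p. indicator (box a b) p *\<^sub>R (g p * indicator (cbox a b) p))"
    unfolding f_def using box_subset_cbox[of a b] by (auto simp: indicator_def fun_eq_iff)
  have f: "integrable lebesgue f"
    unfolding f_eq by (intro integrable_mult_indicator integrable_on_well_inside_cbox[OF ab]) auto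
  have boxes: "(LINT x:box c d|lebesgue. f x) = 0" for c d
    unfolding f_def by (rule set_integral_box_eq_0[OF ab])
  have "(LINT x|lebesgue. f x) = (LINT x:box a b|lebesgue. f x)"
    unfolding set_lebesgue_integral_def f_def
    by (intro Bochner_Integration.integral_cong) (auto simp: indicator_def)
  then have "(LINT x|lebesgue. f x) = 0" using boxes by simp
  with f boxes have "AE x in lebesgue. f x = 0" by (rule AE_eq_0_if_box_integrals_eq_0)
  then show ?thesis by eventually_elim (auto simp: f_def indicator_def)
qed

lemma AE_zero_if_orthogonal_to_tests:
  assumes "open U"
  shows "AE p in lebesgue. p \<in> U \<longrightarrow> g p = 0"
proof -
  obtain \<F> where \<F>: "\<F> \<subseteq> {box a b | a b. well_inside U a b}" "countable \<F>" "\<Union>\<F> = U"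
    using Lindelof[of "{box a b | a b. well_inside U a b}"] Union_well_inside_boxes[OF assms]
    by auto
  have "\<forall>B\<in>\<F>. AE p in lebesgue. p \<in> B \<longrightarrow> g p = 0"
    using \<F>(1) AE_zero_on_well_inside_box by blast
  then have "AE p in lebesgue. \<forall>B\<in>\<F>. p \<in> B \<longrightarrow> g p = 0"
    by (subst AE_ball_countable[OF \<F>(2)])
  then show ?thesis
    unfolding \<F>(3)[symmetric] by eventually_elim blast
qed

end

section \<open>Testing with the chemical potential\<close>

lemma Times_in_sets_lebesgue:
  fixes A :: "'a::euclidean_space set" and B :: "'b::euclidean_space set"
  assumes "A \<in> sets borel" "B \<in> sets borel"
  shows "A \<times> B \<in> sets lebesgue"
proof -
  have "A \<times> B \<in> sets (borel \<Otimes>\<^sub>M borel)" using assms by (intro pair_measureI) auto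
  then show ?thesis by (simp only: borel_prod) simp
qed

lemma integrable_lebesgue_on_support:
  fixes f :: "'a::euclidean_space \<Rightarrow> real"
  assumes "A \<in> sets lebesgue" "\<And>p. p \<notin> A \<Longrightarrow> f p = 0" "integrable (lebesgue_on A) f"
  shows "integrable lebesgue f \<and> integral\<^sup>L lebesgue f = integral\<^sup>L (lebesgue_on A) f"
proof -
  have "(\<lambda>p. indicator A p *\<^sub>R f p) = f"
    using assms(2) by (auto simp: indicator_def fun_eq_iff)
  then show ?thesis
    using integrable_restrict_space[of A lebesgue f] integral_restrict_space[of A lebesgue f]
      assms(1,3) by simp
qed

lemma AE_snd_neq_0: "AE p in lebesgue. snd (p :: 'a::euclidean_space \<times> real) \<noteq> 0"
proof -
  have "(0, 1) \<in> (Basis :: ('a \<times> real) set)" by (simp add: Basis_prod_def)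
  then have "{p :: 'a \<times> real. p \<bullet> (0, 1) = 0} \<in> null_sets lebesgue"
    by (simp add: negligible_iff_null_sets[symmetric] negligible_standard_hyperplane)
  then show ?thesis
    by (auto simp: inner_prod_def dest: AE_not_in)
qed

lemma tint_in_sets_borel: "tint T \<in> sets borel"
  by (cases T) (auto simp: tint_def)

lemma ex_not_in_null_set_above:
  assumes "N \<in> null_sets lebesgue" "ereal a < T"
  obtains t where "a < t" "ereal t < T" "t \<notin> N"
proof -
  obtain b where b: "a < b" "ereal b < T" using ereal_dense2[OF assms(2)] by auto
  have "\<not> {a<..<b} \<subseteq> N"
  proof
    assume "{a<..<b} \<subseteq> N"
    then have "negligible (box a b)"
      using assms(1) negligible_iff_null_sets negligible_subset by (metis box_real(1))
    then have "box a b = {}" by (simp only: negligible_interval(2))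
    with b(1) show False by (simp add: box_real(1))
  qed
  then obtain t where t: "t \<in> {a<..<b}" "t \<notin> N" by blast
  moreover have "ereal t < T" using less_trans[OF _ b(2), of "ereal t"] t(1) by simp
  ultimately show ?thesis by (auto intro: that)
qed

lemma affine_bounded_imp_slope_eq_0:
  fixes A B s :: real
  assumes "\<And>k::int. A - of_int k * s \<le> B"
  shows "s = 0"
proof (rule ccontr)
  assume "s \<noteq> 0"
  then obtain n :: nat where n: "B - A < real n * \<bar>s\<bar>"
    using reals_Archimedean3 by (metis zero_less_abs_iff)
  have "A - of_int (int n) * s \<le> B" "A - of_int (- int n) * s \<le> B" using assms by blast+
  then have "A + real n * \<bar>s\<bar> \<le> B" by (cases "s \<ge> 0") auto
  with n show False by simp
qed

lemma C_inf_zero: "C_inf (\<lambda>x::'a::euclidean_space. 0::'b::euclidean_space)"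
proof -
  have "iter_dd ws (\<lambda>x::'a. 0::'b) = (\<lambda>x. 0)" for ws
    by (induction ws) (simp_all add: dd_def)
  then show ?thesis unfolding C_inf_def Ck_def by simp
qed

lemma test_ST_zero: "test_ST \<Omega> T (\<lambda>x t. 0)"
  unfolding test_ST_def using C_inf_zero by (auto intro!: exI[of _ "{}"] simp: case_prod_beta')

lemma test_ST_div_zero: "test_ST_div \<Omega> T (\<lambda>x t. 0)"
  unfolding test_ST_div_def using test_ST_zero by (simp add: cpdx_def)

lemma test_ST_symTr_zero: "test_ST_symTr \<Omega> T (\<lambda>x t. 0)"
  unfolding test_ST_symTr_def using test_ST_zero
  by (simp add: symTr_def transpose_def trace_def vec_eq_iff)

lemma test_ST_ridge_alg:
  assumes "\<psi> \<in> fun_alg ridge_gens" "\<And>p. p \<notin> box c d \<Longrightarrow> \<psi> p = 0" "cbox c d \<subseteq> \<Omega> \<times> tint T"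
  shows "test_ST \<Omega> T (\<lambda>x t. \<psi> (x, t))"
proof -
  have "\<psi> p = 0" if "p \<notin> cbox c d" for p
    using that assms(2) box_subset_cbox by blast
  then show ?thesis
    unfolding test_ST_def using ridge_alg_C_inf[OF assms(1)] assms(3)
    by (auto intro!: exI[of _ "cbox c d"])
qed

definition mu_residual :: "(real^3) set \<Rightarrow> (real \<Rightarrow> real) \<Rightarrow> (real^3 \<Rightarrow> real \<Rightarrow> real)
    \<Rightarrow> (real^3 \<Rightarrow> real \<Rightarrow> real) \<Rightarrow> (real^3 \<Rightarrow> real \<Rightarrow> real) \<Rightarrow> (real^3) \<times> real \<Rightarrow> real" where
  "mu_residual \<Omega> Wdw \<phi> \<mu> \<beta> p = \<mu> (fst p) (snd p)
     - (- wlap \<Omega> (\<lambda>y. \<phi> y (snd p)) (fst p) + deriv Wdw (\<phi> (fst p) (snd p)) + \<beta> (fst p) (snd p))"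

lemma EV_integrand_mu_test:
  "EV_integrand \<Omega> \<gamma> \<rho>1 \<rho>2 \<nu> \<eta> m Wdw v S \<phi> \<mu> \<beta> vt St pt mt x \<tau>
   = EV_integrand \<Omega> \<gamma> \<rho>1 \<rho>2 \<nu> \<eta> m Wdw v S \<phi> \<mu> \<beta> vt St pt (\<lambda>x t. 0) x \<tau>
     - mu_residual \<Omega> Wdw \<phi> \<mu> \<beta> (x, \<tau>) * mt x \<tau>"
  unfolding EV_integrand_def Let_def mu_residual_def by simp

lemma EV_solution_mu_tests:
  assumes "EV_solution \<Omega> T \<gamma> \<rho>1 \<rho>2 \<nu> \<eta> m P Wdw Wsing dWsing f v0 S0 \<phi>0 K v S \<phi> \<mu> E \<beta>"
    and "test_ST \<Omega> T mt"
  shows "\<exists>N. N \<in> null_sets lebesgue \<and> (\<forall>t\<in>tint T - N. 0 < t \<longrightarrow>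
           EV_ineq \<Omega> \<gamma> \<rho>1 \<rho>2 \<nu> \<eta> m P Wdw (\<lambda>y. Wdw y + Wsing y) f K v S \<phi> \<mu> E \<beta>
             (\<lambda>x t. 0) (\<lambda>x t. 0) (\<lambda>x t. 0) mt 0 t)"
proof -
  from assms(1) have all: "\<forall>vt St pt mt.
      test_ST_div \<Omega> T vt \<and> test_ST_symTr \<Omega> T St \<and> test_ST \<Omega> T pt \<and> test_ST \<Omega> T mt \<longrightarrow>
      (\<exists>N. N \<in> null_sets lebesgue \<and>
         (\<forall>s t. s \<in> {0} \<union> (tint T - N) \<and> t \<in> tint T - N \<and> s < t \<longrightarrow>
            EV_ineq \<Omega> \<gamma> \<rho>1 \<rho>2 \<nu> \<eta> m P Wdw (\<lambda>y. Wdw y + Wsing y) f K v S \<phi> \<mu> E \<beta> vt St pt mt s t))"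
    unfolding EV_solution_def Let_def by (elim conjE)
  have tests: "test_ST_div \<Omega> T (\<lambda>x t. 0) \<and> test_ST_symTr \<Omega> T (\<lambda>x t. 0) \<and> test_ST \<Omega> T (\<lambda>x t. 0)
      \<and> test_ST \<Omega> T mt"
    using assms(2) by (simp add: test_ST_zero test_ST_div_zero test_ST_symTr_zero)
  from all[rule_format, OF tests] obtain N where "N \<in> null_sets lebesgue" and N: "\<forall>s t. s \<in> {0} \<union> (tint T - N) \<and> t \<in> tint T - N \<and> s < t \<longrightarrow>
      EV_ineq \<Omega> \<gamma> \<rho>1 \<rho>2 \<nu> \<eta> m P Wdw (\<lambda>y. Wdw y + Wsing y) f K v S \<phi> \<mu> E \<beta>
        (\<lambda>x t. 0) (\<lambda>x t. 0) (\<lambda>x t. 0) mt s t"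
    by blast
  moreover have "EV_ineq \<Omega> \<gamma> \<rho>1 \<rho>2 \<nu> \<eta> m P Wdw (\<lambda>y. Wdw y + Wsing y) f K v S \<phi> \<mu> E \<beta>
      (\<lambda>x t. 0) (\<lambda>x t. 0) (\<lambda>x t. 0) mt 0 t" if "t \<in> tint T - N" "0 < t" for t
    using N[rule_format, of 0 t] that by simp
  ultimately show ?thesis by blast
qed

lemma ereal_le_if_add_enn2ereal_le:
  assumes "ereal x + enn2ereal p \<le> ereal y"
  shows "x \<le> y"
proof -
  have "ereal x \<le> ereal x + enn2ereal p" by (intro add_increasing2) auto
  from order_trans[OF this assms] show ?thesis by simp
qed

text \<open>Since K and P(\<phi>; 0) vanish, the extended-real inequality reduces to a real one.\<close>

lemma EV_ineq_mu_test_imp: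
  assumes "EV_ineq \<Omega> \<gamma> \<rho>1 \<rho>2 \<nu> \<eta> m P Wdw W f K v S \<phi> \<mu> E \<beta> (\<lambda>x t. 0) (\<lambda>x t. 0) (\<lambda>x t. 0) mt s t"
    and "\<And>\<tau>. K (\<lambda>x t. 0) (\<lambda>x t. 0) (\<lambda>x t. 0) mt \<tau> = 0"
    and "\<forall>x\<in>\<Omega>. \<forall>y. P x y 0 = 0"
  shows "integrable (lebesgue_on (\<Omega> \<times> {s..t}))
      (\<lambda>(x, \<tau>). EV_integrand \<Omega> \<gamma> \<rho>1 \<rho>2 \<nu> \<eta> m Wdw v S \<phi> \<mu> \<beta> (\<lambda>x t. 0) (\<lambda>x t. 0) (\<lambda>x t. 0) mt x \<tau>)
    \<and> E t - E s + (\<integral>p. (\<lambda>(x, \<tau>). EV_integrand \<Omega> \<gamma> \<rho>1 \<rho>2 \<nu> \<eta> m Wdw v S \<phi> \<mu> \<beta>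
          (\<lambda>x t. 0) (\<lambda>x t. 0) (\<lambda>x t. 0) mt x \<tau>) p \<partial>lebesgue_on (\<Omega> \<times> {s..t}))
      \<le> (\<integral>\<tau>. f \<tau> (\<lambda>x. v x \<tau>) \<partial>lebesgue_on {s..t})"
proof -
  have "(\<integral>\<^sup>+x. P x (\<phi> x \<tau>) 0 \<partial>lebesgue_on \<Omega>) = 0" for \<tau>
    using nn_integral_cong[of "lebesgue_on \<Omega>" "\<lambda>x. P x (\<phi> x \<tau>) 0" "\<lambda>x. 0"] assms(3) by simp
  then show ?thesis
    using assms(1,2) unfolding EV_ineq_def Let_def
    by (auto simp: zero_ennreal.rep_eq dest!: ereal_le_if_add_enn2ereal_le)
qed

lemma set_integral_mu_residual_eq_0:
  assumes EV: "\<And>k::int. EV_ineq \<Omega> \<gamma> \<rho>1 \<rho>2 \<nu> \<eta> m P Wdw W f K v S \<phi> \<mu> E \<beta>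
                 (\<lambda>x t. 0) (\<lambda>x t. 0) (\<lambda>x t. 0) (\<lambda>x \<tau>. of_int k * \<psi> (x, \<tau>)) s t"
    and K0: "\<And>(k::int) \<tau>. K (\<lambda>x t. 0) (\<lambda>x t. 0) (\<lambda>x t. 0) (\<lambda>x \<tau>. of_int k * \<psi> (x, \<tau>)) \<tau> = 0"
    and P0: "\<forall>x\<in>\<Omega>. \<forall>y. P x y 0 = 0"
  defines "r \<equiv> mu_residual \<Omega> Wdw \<phi> \<mu> \<beta>" and "M \<equiv> lebesgue_on (\<Omega> \<times> {s..t})"
  shows "integrable M (\<lambda>p. r p * \<psi> p) \<and> (\<integral>p. r p * \<psi> p \<partial>M) = 0"
proof -
  define Z where "Z = (\<lambda>(x, \<tau>). EV_integrand \<Omega> \<gamma> \<rho>1 \<rho>2 \<nu> \<eta> m Wdw v S \<phi> \<mu> \<beta>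
                         (\<lambda>x t. 0) (\<lambda>x t. 0) (\<lambda>x t. 0) (\<lambda>x t. 0) x \<tau>)"
  define F where "F = (\<integral>\<tau>. f \<tau> (\<lambda>x. v x \<tau>) \<partial>lebesgue_on {s..t})"
  have k_test: "integrable M (\<lambda>p. Z p - of_int k * (r p * \<psi> p))
      \<and> E t - E s + (\<integral>p. Z p - of_int k * (r p * \<psi> p) \<partial>M) \<le> F" for k :: int
  proof -
    have "EV_integrand \<Omega> \<gamma> \<rho>1 \<rho>2 \<nu> \<eta> m Wdw v S \<phi> \<mu> \<beta> (\<lambda>x t. 0) (\<lambda>x t. 0) (\<lambda>x t. 0)
            (\<lambda>x \<tau>. of_int k * \<psi> (x, \<tau>)) x \<tau> = Z (x, \<tau>) - of_int k * (r (x, \<tau>) * \<psi> (x, \<tau>))" for x \<tau>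
      unfolding Z_def r_def by (subst EV_integrand_mu_test) (simp add: mult.left_commute)
    then have "(\<lambda>(x, \<tau>). EV_integrand \<Omega> \<gamma> \<rho>1 \<rho>2 \<nu> \<eta> m Wdw v S \<phi> \<mu> \<beta> (\<lambda>x t. 0) (\<lambda>x t. 0) (\<lambda>x t. 0)
              (\<lambda>x \<tau>. of_int k * \<psi> (x, \<tau>)) x \<tau>) = (\<lambda>p. Z p - of_int k * (r p * \<psi> p))"
      by auto
    then show ?thesis
      using EV_ineq_mu_test_imp[of \<Omega> \<gamma> \<rho>1 \<rho>2 \<nu> \<eta> m P Wdw W f K v S \<phi> \<mu> E \<beta>
          "\<lambda>x \<tau>. of_int k * \<psi> (x, \<tau>)" s t] EV K0 P0
      unfolding M_def F_def by simp
  qed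
  have Z: "integrable M Z" using k_test[of 0] by simp
  have r\<psi>: "integrable M (\<lambda>p. r p * \<psi> p)"
    using Bochner_Integration.integrable_diff[OF Z conjunct1[OF k_test[of 1]]] by simp
  have "E t - E s + (\<integral>p. Z p \<partial>M) - of_int k * (\<integral>p. r p * \<psi> p \<partial>M) \<le> F" for k :: int
    using k_test[of k] Z r\<psi> by simp
  then have "(\<integral>p. r p * \<psi> p \<partial>M) = 0" by (rule affine_bounded_imp_slope_eq_0)
  with r\<psi> show ?thesis by simp
qed

lemma EV_solution_scaled_mu_tests:
  assumes sol: "EV_solution \<Omega> T \<gamma> \<rho>1 \<rho>2 \<nu> \<eta> m P Wdw Wsing dWsing f v0 S0 \<phi>0 K v S \<phi> \<mu> E \<beta>"
    and test: "\<And>k::int. test_ST \<Omega> T (\<lambda>x \<tau>. of_int k * \<psi> (x, \<tau>))"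
    and a: "0 \<le> a" "ereal a < T"
  obtains t where "a < t" "ereal t < T"
    "\<And>k::int. EV_ineq \<Omega> \<gamma> \<rho>1 \<rho>2 \<nu> \<eta> m P Wdw (\<lambda>y. Wdw y + Wsing y) f K v S \<phi> \<mu> E \<beta>
       (\<lambda>x t. 0) (\<lambda>x t. 0) (\<lambda>x t. 0) (\<lambda>x \<tau>. of_int k * \<psi> (x, \<tau>)) 0 t"
proof -
  have "\<forall>k::int. \<exists>N. N \<in> null_sets lebesgue \<and> (\<forall>t\<in>tint T - N. 0 < t \<longrightarrow>
           EV_ineq \<Omega> \<gamma> \<rho>1 \<rho>2 \<nu> \<eta> m P Wdw (\<lambda>y. Wdw y + Wsing y) f K v S \<phi> \<mu> E \<beta>
             (\<lambda>x t. 0) (\<lambda>x t. 0) (\<lambda>x t. 0) (\<lambda>x \<tau>. of_int k * \<psi> (x, \<tau>)) 0 t)"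
    using EV_solution_mu_tests[OF sol test] by blast
  from choice[OF this] obtain N where N: "\<forall>k::int. N k \<in> null_sets lebesgue \<and> (\<forall>t\<in>tint T - N k. 0 < t \<longrightarrow>
           EV_ineq \<Omega> \<gamma> \<rho>1 \<rho>2 \<nu> \<eta> m P Wdw (\<lambda>y. Wdw y + Wsing y) f K v S \<phi> \<mu> E \<beta>
             (\<lambda>x t. 0) (\<lambda>x t. 0) (\<lambda>x t. 0) (\<lambda>x \<tau>. of_int k * \<psi> (x, \<tau>)) 0 t)"
    by (rule exE)
  have "(\<Union>k. N k) \<in> null_sets lebesgue" using N by (intro null_sets_UN') auto
  then obtain t where t: "a < t" "ereal t < T" "t \<notin> (\<Union>k. N k)"
    using a(2) by (rule ex_not_in_null_set_above)
  have EV: "EV_ineq \<Omega> \<gamma> \<rho>1 \<rho>2 \<nu> \<eta> m P Wdw (\<lambda>y. Wdw y + Wsing y) f K v S \<phi> \<mu> E \<beta>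
      (\<lambda>x t. 0) (\<lambda>x t. 0) (\<lambda>x t. 0) (\<lambda>x \<tau>. of_int k * \<psi> (x, \<tau>)) 0 t" for k
    using N t a(1) by (auto simp: tint_def)
  show ?thesis by (rule that[OF t(1,2) EV])
qed

lemma mu_residual_orthogonal:
  assumes \<Omega>: "open \<Omega>"
    and sol: "EV_solution \<Omega> T \<gamma> \<rho>1 \<rho>2 \<nu> \<eta> m P Wdw Wsing dWsing f v0 S0 \<phi>0 K v S \<phi> \<mu> E \<beta>"
    and K0: "\<And>mt \<tau>. test_ST \<Omega> T mt \<Longrightarrow> K (\<lambda>x t. 0) (\<lambda>x t. 0) (\<lambda>x t. 0) mt \<tau> = 0"
    and P0: "\<forall>x\<in>\<Omega>. \<forall>y. P x y 0 = 0"
    and \<psi>: "\<psi> \<in> fun_alg ridge_gens" "\<And>p. p \<notin> box c d \<Longrightarrow> \<psi> p = 0"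
    and cd: "cbox c d \<subseteq> \<Omega> \<times> {t. 0 < t \<and> ereal t < T}"
  defines "r \<equiv> mu_residual \<Omega> Wdw \<phi> \<mu> \<beta>"
  shows "integrable lebesgue (\<lambda>p. r p * \<psi> p) \<and> (\<integral>p. r p * \<psi> p \<partial>lebesgue) = 0"
proof (cases "box c d = {}")
  case True
  then have "\<psi> = (\<lambda>p. 0)" using \<psi>(2) by auto
  then show ?thesis by simp
next
  case False
  obtain c1 c2 d1 d2 where c: "c = (c1, c2)" and d: "d = (d1, d2)" by fastforce
  have "d \<in> cbox c d" using False by (auto simp: box_ne_empty mem_box less_imp_le)
  then have d2: "0 < d2" "ereal d2 < T" using cd d by auto
  have test_k: "test_ST \<Omega> T (\<lambda>x \<tau>. of_int k * \<psi> (x, \<tau>))" for k :: int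
  proof -
    have "(\<lambda>p. of_int k * \<psi> p) \<in> fun_alg ridge_gens" using \<psi>(1) by (intro fun_alg.mult fun_alg.const)
    moreover have "cbox c d \<subseteq> \<Omega> \<times> tint T" using cd by (auto simp: tint_def)
    ultimately show ?thesis
      using test_ST_ridge_alg[of "\<lambda>p. of_int k * \<psi> p" c d] \<psi>(2) by auto
  qed
  obtain t where t: "d2 < t" "ereal t < T" and EV: "\<And>k::int. EV_ineq \<Omega> \<gamma> \<rho>1 \<rho>2 \<nu> \<eta> m P Wdw
      (\<lambda>y. Wdw y + Wsing y) f K v S \<phi> \<mu> E \<beta> (\<lambda>x t. 0) (\<lambda>x t. 0) (\<lambda>x t. 0) (\<lambda>x \<tau>. of_int k * \<psi> (x, \<tau>)) 0 t"
    by (rule EV_solution_scaled_mu_tests[OF sol test_k less_imp_le[OF d2(1)] d2(2)]) blast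
  have K0': "K (\<lambda>x t. 0) (\<lambda>x t. 0) (\<lambda>x t. 0) (\<lambda>x \<tau>. of_int k * \<psi> (x, \<tau>)) \<tau> = 0" for k \<tau>
    using K0[OF test_k[of k]] .
  have "integrable (lebesgue_on (\<Omega> \<times> {0..t})) (\<lambda>p. r p * \<psi> p)
      \<and> (\<integral>p. r p * \<psi> p \<partial>lebesgue_on (\<Omega> \<times> {0..t})) = 0"
    unfolding r_def using EV K0' P0 by (rule set_integral_mu_residual_eq_0)
  moreover have "\<Omega> \<times> {0..t} \<in> sets lebesgue"
    using \<Omega> by (intro Times_in_sets_lebesgue) auto
  moreover have "box c d \<subseteq> \<Omega> \<times> {0..t}"
  proof
    fix p assume "p \<in> box c d"
    then have p: "p \<in> cbox c d" using box_subset_cbox by blast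
    then have "snd p \<le> d2" unfolding c d cbox_Pair_eq by (auto simp: cbox_interval)
    moreover have "fst p \<in> \<Omega> \<and> 0 < snd p" using cd p by (auto simp: mem_Times_iff)
    ultimately show "p \<in> \<Omega> \<times> {0..t}" using t(1) by (auto simp: mem_Times_iff)
  qed
  then have "\<psi> p = 0" if "p \<notin> \<Omega> \<times> {0..t}" for p
    using that \<psi>(2) by blast
  ultimately show ?thesis
    using integrable_lebesgue_on_support[of "\<Omega> \<times> {0..t}" "\<lambda>p. r p * \<psi> p"] by simp
qed

lemma AE_mu_residual_eq_0:
  assumes \<Omega>: "open \<Omega>"
    and sol: "EV_solution \<Omega> T \<gamma> \<rho>1 \<rho>2 \<nu> \<eta> m P Wdw Wsing dWsing f v0 S0 \<phi>0 K v S \<phi> \<mu> E \<beta>"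
    and K0: "\<And>mt \<tau>. test_ST \<Omega> T mt \<Longrightarrow> K (\<lambda>x t. 0) (\<lambda>x t. 0) (\<lambda>x t. 0) mt \<tau> = 0"
    and P0: "\<forall>x\<in>\<Omega>. \<forall>y. P x y 0 = 0"
  shows "AE p in lebesgue_on (\<Omega> \<times> tint T). mu_residual \<Omega> Wdw \<phi> \<mu> \<beta> p = 0"
proof -
  let ?U = "\<Omega> \<times> {t. 0 < t \<and> ereal t < T}"
  have "open {t. 0 < t \<and> ereal t < T}"
    by (cases T) (auto simp: open_Collect_less open_Collect_conj)
  then have "AE p in lebesgue. p \<in> ?U \<longrightarrow> mu_residual \<Omega> Wdw \<phi> \<mu> \<beta> p = 0"
    using \<Omega> by (intro AE_zero_if_orthogonal_to_tests mu_residual_orthogonal[OF \<Omega> sol K0 P0] open_Times)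
  moreover have "\<Omega> \<times> tint T \<in> sets lebesgue"
    using \<Omega> by (intro Times_in_sets_lebesgue tint_in_sets_borel) auto
  ultimately show ?thesis
    using AE_snd_neq_0 by (auto simp: AE_restrict_space_iff tint_def elim: eventually_mono)
qed

theorem mainTheorem3:
  fixes \<Omega> :: "(real^3) set" and T :: ereal and \<gamma> \<rho>1 \<rho>2 :: real
    and \<nu> \<eta> m Wdw Wsg :: "real \<Rightarrow> real"
    and P :: "real^3 \<Rightarrow> real \<Rightarrow> real^3^3 \<Rightarrow> ennreal"
    and sg :: bool
    and f :: "real \<Rightarrow> (real^3 \<Rightarrow> real^3) \<Rightarrow> real"
    and v0 :: "real^3 \<Rightarrow> real^3" and S0 :: "real^3 \<Rightarrow> real^3^3" and \<phi>0 :: "real^3 \<Rightarrow> real"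
    and K :: "(real^3 \<Rightarrow> real \<Rightarrow> real^3) \<Rightarrow> (real^3 \<Rightarrow> real \<Rightarrow> real^3^3) \<Rightarrow> (real^3 \<Rightarrow> real \<Rightarrow> real)
              \<Rightarrow> (real^3 \<Rightarrow> real \<Rightarrow> real) \<Rightarrow> real \<Rightarrow> real"
    and v :: "real^3 \<Rightarrow> real \<Rightarrow> real^3" and S :: "real^3 \<Rightarrow> real \<Rightarrow> real^3^3"
    and \<phi> \<mu> \<beta> :: "real^3 \<Rightarrow> real \<Rightarrow> real" and E :: "real \<Rightarrow> real"
  assumes "bounded_C2_domain \<Omega>"
    and "0 < T"
    and "\<gamma> \<ge> 0"
    and "assm_A1 \<rho>1 \<rho>2" and "assm_A2 \<nu> \<eta>" and "assm_A3 m" and "assm_A4 \<Omega> P"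
    and "assm_A5 \<Omega> T v0 S0 f \<phi>0" and "assm_A6 Wdw" and "assm_A7 Wsg"
    and "reg_weight \<Omega> T K"
    and "\<And>mt \<tau>. test_ST \<Omega> T mt \<Longrightarrow> K (\<lambda>x t. 0) (\<lambda>x t. 0) (\<lambda>x t. 0) mt \<tau> = 0"
    and "EV_solution \<Omega> T \<gamma> \<rho>1 \<rho>2 \<nu> \<eta> m P Wdw
           (if sg then Wsg else (\<lambda>_. 0)) (if sg then subdiff_sg Wsg else subdiff_ind)
           f v0 S0 \<phi>0 K v S \<phi> \<mu> E \<beta>"
  shows "AE p in lebesgue_on (\<Omega> \<times> tint T).
           \<mu> (fst p) (snd p) = - wlap \<Omega> (\<lambda>y. \<phi> y (snd p)) (fst p) + deriv Wdw (\<phi> (fst p) (snd p))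
                                 + \<beta> (fst p) (snd p)
         \<and> (if sg then subdiff_sg Wsg else subdiff_ind) (\<phi> (fst p) (snd p)) (\<beta> (fst p) (snd p))"
proof -
  have \<Omega>: "open \<Omega>" using assms(1) by (simp add: bounded_C2_domain_def)
  have P0: "\<forall>x\<in>\<Omega>. \<forall>y. P x y 0 = 0" using assms(7) by (simp add: assm_A4_def)
  have "AE p in lebesgue_on (\<Omega> \<times> tint T). mu_residual \<Omega> Wdw \<phi> \<mu> \<beta> p = 0"
    by (rule AE_mu_residual_eq_0[OF \<Omega> assms(13) assms(12) P0])
  moreover have "AE p in lebesgue_on (\<Omega> \<times> tint T).
      (if sg then subdiff_sg Wsg else subdiff_ind) (\<phi> (fst p) (snd p)) (\<beta> (fst p) (snd p))"
    using assms(13) unfolding EV_solution_def Let_def by (elim conjE)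
  ultimately show ?thesis
    by eventually_elim (simp add: mu_residual_def)
qed

end
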